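(* Let $X$ be a complex Banach space, let $B,A_1,\dots,A_n$ be closed linear operators on $X$, let $C\in L(X)$ be injective, let $k:\mathbb N_0\to\mathbb C$ with $k(0)\neq0$, and let $a_1,\dots,a_n:\mathbb N_0\to\mathbb C$ with $a_i(0)\neq0$ for all $i$. Let $T:=B-\sum_{i=1}^{n}a_i(0)A_i$ with domain $D(B)\cap\bigcap_{i=1}^nD(A_i)$. (i) Suppose $(S(v))_{v\in\mathbb N_0}$ is a discrete $(k,C,B,(A_i)_{1\le i\le n})$-existence family such that $S(0)Bx=BS(0)x$ and $S(0)A_ix=A_iS(0)x$ for all $x\in D(B)\cap D(A_1)\cap\dots\cap D(A_n)$ and all $i$. Then $T$ is injective, $R(C)\subseteq R(T)$, $T^{-1}C\in L(X)$, $S(0)=k(0)T^{-1}C$, $$S(v)x=T^{-1}\Bigl[k(v)Cx+\sum_{i=1}^{n}A_i\sum_{j=0}^{v-1}a_i(v-j)S(j)x\Bigr],\quad v\in\mathbb N,\ x\in X,\qquad(\dagger)$$ and for all $i$ and $v\in\mathbb N_0$ one has $S(v)X\subseteq D(A_i)$ and $A_iS(v)\in L(X)$. (ii) Suppose $T$ is injective, $R(C)\subseteq R(T)$, $T^{-1}C\in L(X)$, and for every $l\in\mathbb N$ and every choice $i_1,\dots,i_l\in\{1,\dots,n\}$ the operator $T^{-1}A_{i_1}T^{-1}A_{i_2}\cdots T^{-1}A_{i_l}T^{-1}C$ is defined on all of $X$ and belongs to $L(X)$. Define $S(0):=k(0)T^{-1}C$ and $S(v)$, $v\in\mathbb N$,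 recursively by $(\dagger)$. Then $(S(v))_{v\in\mathbb N_0}\subseteq L(X)$ is well defined, $A_iS(v)\in L(X)$ for all $i$ and $v$, and $(S(v))_{v\in\mathbb N_0}$ is the unique discrete $(k,C,B,(A_i)_{1\le i\le n})$-existence family. Furthermore: if $\mathcal I\subseteq\{1,\dots,n\}$ and (U1) $CB\subseteq BC$ and $CA_i\subseteq A_iC$ for all $i\notin\mathcal I$; (U2) for all $i\notin\mathcal I$ and $x\in D(A_i)\cap D(B)$: $Bx\in D(A_i)$, $A_ix\in D(B)$ and $A_iBx=BA_ix$; (U3) for all $i\notin\mathcal I$, $j\in\{1,\dots,n\}$ and $x\in D(A_i)\cap D(A_j)$: $A_jx\in D(A_i)$, $A_ix\in D(A_j)$ and $A_iA_jx=A_jA_ix$, then $(S(v))$ is a discrete $(k,C,B,(A_i)_{1\le i\le n},\mathcal I)$-existence family; and if there exist a closed linear operator $A$ with $CA\subseteq AC$ and complex polynomials $P_B,P_1,\dots,P_n$ with $B=P_B(A)$, $A_i=P_i(A)$ ($1\le i\le n$), then $(S(v))$ is a discrete $(k,C,B,(A_i)_{1\le i\le n},\emptyset)$-existence family. (iii) Suppose $C=\mathrm I$, $T^{-1}\in L(X)$, $\sum_{v=0}^\infty|a_i(v)|<\infty$ for $1\le i\le n$, $\sum_{v=0}^\infty|k(v)|<\infty$, and either (a) $A_i\in L(X)$ for $1\le i\le n$ and $1>\sum_{i=1}^{n}\sum_{v=1}^{\infty}|a_i(v)|\,\|T^{-1}A_i\|$; or (b) either (U1)–(U3) hold with $\mathcal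 I=\emptyset$, or there exist a closed linear operator $A$ and complex polynomials $P_B,P_1,\dots,P_n$ with $B=P_B(A)$, $A_i=P_i(A)$; and $1>\sum_{i=1}^{n}\sum_{v=1}^{\infty}|a_i(v)|\,\|A_iT^{-1}\|$. Then the hypotheses of (ii) hold, and the family $(S(v))$ of (ii) satisfies $\sum_{v=0}^\infty\|S(v)\|<\infty$ and $\sum_{v=0}^\infty\|A_i(a_i\ast_0S)(v)\|<\infty$ for $1\le i\le n$; if (b) holds, then in addition $\sum_{v=0}^\infty\|A_iS(v)\|<\infty$ for $1\le i\le n$.
   Context: $L(X)$ is the space of bounded linear operators on $X$; $R(\cdot)$ denotes range. For sequences, $(a\ast_0 S)(v):=\sum_{j=0}^{v}a(v-j)S(j)$. A family $(S(v))_{v\in\mathbb N_0}\subseteq L(X)$ is a discrete $(k,C,B,(A_i)_{1\le i\le n})$-existence family if for every $v\in\mathbb N_0$, $i\in\{1,\dots,n\}$ and $x\in X$: $(a_i\ast_0S)(v)x\in D(A_i)$, the map $x\mapsto A_i(a_i\ast_0S)(v)x$ belongs to $L(X)$, $S(v)x\in D(B)$, and $BS(v)x=k(v)Cx+\sum_{i=1}^nA_i(a_i\ast_0S)(v)x$. For $\mathcal I\subseteq\{1,\dots,n\}$ it is a discrete $(k,C,B,(A_i)_{1\le i\le n},\mathcal I)$-existence family if moreover $S(v)A_i\subseteq A_iS(v)$ (i.e. for $x\in D(A_i)$: $S(v)x\in D(A_i)$ and $A_iS(v)x=S(v)A_ix$) for all $v\in\mathbb N_0$ and $i\notin\mathcal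 I$. "$A_iS(v)\in L(X)$" means $S(v)X\subseteq D(A_i)$ and $A_iS(v)$ is bounded. For a polynomial $P$ and closed $A$, $P(A)$ is the usual polynomial operator on $D(A^{\deg P})$. *)

theory Defs
  imports "HOL-Analysis.Analysis" "HOL-Computational_Algebra.Polynomial"
begin

text \<open>The library only has real normed spaces; a complex Banach space is a real Banach
  space with a compatible complex scalar multiplication.\<close>

class complex_banach = banach +
  fixes scaleC :: "complex \<Rightarrow> 'a \<Rightarrow> 'a" (infixr \<open>*\<^sub>C\<close> 75)
  assumes scaleC_add_right: "c *\<^sub>C (x + y) = c *\<^sub>C x + c *\<^sub>C y"
    and scaleC_add_left: "(c + d) *\<^sub>C x = c *\<^sub>C x + d *\<^sub>C x"
    and scaleC_scaleC: "c *\<^sub>C (d *\<^sub>C x) = (c * d) *\<^sub>C x"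
    and scaleC_one: "1 *\<^sub>C x = x"
    and scaleR_scaleC: "r *\<^sub>R x = complex_of_real r *\<^sub>C x"
    and norm_scaleC: "norm (c *\<^sub>C x) = cmod c * norm x"

definition bounded_clinear :: "('a::complex_banach \<Rightarrow> 'a) \<Rightarrow> bool" where
  "bounded_clinear f \<longleftrightarrow> bounded_linear f \<and> (\<forall>c x. f (c *\<^sub>C x) = c *\<^sub>C f x)"

text \<open>A (possibly unbounded) linear operator is a pair: domain D and action f on D.\<close>
definition clinear_op :: "'a::complex_banach set \<Rightarrow> ('a \<Rightarrow> 'a) \<Rightarrow> bool" where
  "clinear_op D f \<longleftrightarrow> 0 \<in> D \<and> (\<forall>x\<in>D. \<forall>y\<in>D. x + y \<in> D \<and> f (x + y) = f x + f y)
      \<and> (\<forall>c. \<forall>x\<in>D. c *\<^sub>C x \<in> D \<and> f (c *\<^sub>C x) = c *\<^sub>C f x)"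

definition closed_op :: "'a::complex_banach set \<Rightarrow> ('a \<Rightarrow> 'a) \<Rightarrow> bool" where
  "closed_op D f \<longleftrightarrow> clinear_op D f \<and> closed ((\<lambda>x. (x, f x)) ` D)"

definition Tdom :: "'a set \<Rightarrow> (nat \<Rightarrow> 'a set) \<Rightarrow> nat \<Rightarrow> 'a set" where
  "Tdom DB DA n = DB \<inter> (\<Inter>i\<in>{1..n}. DA i)"

definition Top :: "('a::complex_banach \<Rightarrow> 'a) \<Rightarrow> (nat \<Rightarrow> 'a \<Rightarrow> 'a) \<Rightarrow> (nat \<Rightarrow> nat \<Rightarrow> complex)
    \<Rightarrow> nat \<Rightarrow> 'a \<Rightarrow> 'a" where
  "Top B A a n x = B x - (\<Sum>i=1..n. a i 0 *\<^sub>C A i x)"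

text \<open>T^{-1} (meaningful on the range of T when T is injective on its domain).\<close>
definition Tinv :: "'a set \<Rightarrow> (nat \<Rightarrow> 'a set) \<Rightarrow> ('a::complex_banach \<Rightarrow> 'a) \<Rightarrow> (nat \<Rightarrow> 'a \<Rightarrow> 'a)
    \<Rightarrow> (nat \<Rightarrow> nat \<Rightarrow> complex) \<Rightarrow> nat \<Rightarrow> 'a \<Rightarrow> 'a" where
  "Tinv DB DA B A a n = the_inv_into (Tdom DB DA n) (Top B A a n)"

definition conv0 :: "(nat \<Rightarrow> complex) \<Rightarrow> (nat \<Rightarrow> 'a \<Rightarrow> 'a::complex_banach) \<Rightarrow> nat \<Rightarrow> 'a \<Rightarrow> 'a" where
  "conv0 a S v x = (\<Sum>j=0..v. a (v - j) *\<^sub>C S j x)"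

definition tail_sum :: "(nat \<Rightarrow> complex) \<Rightarrow> (nat \<Rightarrow> 'a \<Rightarrow> 'a::complex_banach) \<Rightarrow> nat \<Rightarrow> 'a \<Rightarrow> 'a" where
  "tail_sum a S v x = (\<Sum>j<v. a (v - j) *\<^sub>C S j x)"

definition rec_rhs :: "(nat \<Rightarrow> complex) \<Rightarrow> ('a \<Rightarrow> 'a::complex_banach) \<Rightarrow> (nat \<Rightarrow> 'a \<Rightarrow> 'a)
    \<Rightarrow> (nat \<Rightarrow> nat \<Rightarrow> complex) \<Rightarrow> nat \<Rightarrow> (nat \<Rightarrow> 'a \<Rightarrow> 'a) \<Rightarrow> nat \<Rightarrow> 'a \<Rightarrow> 'a" where
  "rec_rhs k C A a n S v x = k v *\<^sub>C C x + (\<Sum>i=1..n. A i (tail_sum (a i) S v x))"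

definition disc_exist_fam ::
  "(nat \<Rightarrow> complex) \<Rightarrow> ('a::complex_banach \<Rightarrow> 'a) \<Rightarrow> 'a set \<Rightarrow> ('a \<Rightarrow> 'a)
   \<Rightarrow> (nat \<Rightarrow> 'a set) \<Rightarrow> (nat \<Rightarrow> 'a \<Rightarrow> 'a) \<Rightarrow> (nat \<Rightarrow> nat \<Rightarrow> complex) \<Rightarrow> nat
   \<Rightarrow> (nat \<Rightarrow> 'a \<Rightarrow> 'a) \<Rightarrow> bool" where
  "disc_exist_fam k C DB B DA A a n S \<longleftrightarrow>
     (\<forall>v. bounded_clinear (S v)) \<and>
     (\<forall>v. \<forall>i\<in>{1..n}. (\<forall>x. conv0 (a i) S v x \<in> DA i)
                      \<and> bounded_clinear (\<lambda>x. A i (conv0 (a i) S v x))) \<and>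
     (\<forall>v x. S v x \<in> DB \<and>
            B (S v x) = k v *\<^sub>C C x + (\<Sum>i=1..n. A i (conv0 (a i) S v x)))"

definition disc_exist_fam_I ::
  "(nat \<Rightarrow> complex) \<Rightarrow> ('a::complex_banach \<Rightarrow> 'a) \<Rightarrow> 'a set \<Rightarrow> ('a \<Rightarrow> 'a)
   \<Rightarrow> (nat \<Rightarrow> 'a set) \<Rightarrow> (nat \<Rightarrow> 'a \<Rightarrow> 'a) \<Rightarrow> (nat \<Rightarrow> nat \<Rightarrow> complex) \<Rightarrow> nat
   \<Rightarrow> nat set \<Rightarrow> (nat \<Rightarrow> 'a \<Rightarrow> 'a) \<Rightarrow> bool" where
  "disc_exist_fam_I k C DB B DA A a n I S \<longleftrightarrow>
     disc_exist_fam k C DB B DA A a n S \<and>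
     (\<forall>v. \<forall>i\<in>{1..n} - I. \<forall>x\<in>DA i. S v x \<in> DA i \<and> A i (S v x) = S v (A i x))"

fun opchain :: "('a \<Rightarrow> 'a) \<Rightarrow> ('a \<Rightarrow> 'a) \<Rightarrow> (nat \<Rightarrow> 'a \<Rightarrow> 'a) \<Rightarrow> nat list \<Rightarrow> 'a \<Rightarrow> 'a" where
  "opchain Ti C A [] x = Ti (C x)"
| "opchain Ti C A (i # is) x = Ti (A i (opchain Ti C A is x))"

fun chain_defined :: "'a set \<Rightarrow> ('a \<Rightarrow> 'a) \<Rightarrow> ('a \<Rightarrow> 'a) \<Rightarrow> ('a \<Rightarrow> 'a) \<Rightarrow> (nat \<Rightarrow> 'a set)
    \<Rightarrow> (nat \<Rightarrow> 'a \<Rightarrow> 'a) \<Rightarrow> nat list \<Rightarrow> 'a \<Rightarrow> bool" where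
  "chain_defined DT T Ti C DA A [] x \<longleftrightarrow> C x \<in> T ` DT"
| "chain_defined DT T Ti C DA A (i # is) x \<longleftrightarrow> chain_defined DT T Ti C DA A is x
      \<and> opchain Ti C A is x \<in> DA i \<and> A i (opchain Ti C A is x) \<in> T ` DT"

definition op_commutes_bdd :: "('a \<Rightarrow> 'a) \<Rightarrow> 'a set \<Rightarrow> ('a \<Rightarrow> 'a) \<Rightarrow> bool" where
  \<comment> \<open>C F \<subseteq> F C for bounded C and operator (D, F)\<close>
  "op_commutes_bdd C D F \<longleftrightarrow> (\<forall>x\<in>D. C x \<in> D \<and> F (C x) = C (F x))"

definition U1 :: "('a \<Rightarrow> 'a) \<Rightarrow> 'a set \<Rightarrow> ('a \<Rightarrow> 'a) \<Rightarrow> (nat \<Rightarrow> 'a set) \<Rightarrow> (nat \<Rightarrow> 'a \<Rightarrow> 'a)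
    \<Rightarrow> nat \<Rightarrow> nat set \<Rightarrow> bool" where
  "U1 C DB B DA A n I \<longleftrightarrow> op_commutes_bdd C DB B \<and> (\<forall>i\<in>{1..n} - I. op_commutes_bdd C (DA i) (A i))"

definition U2 :: "'a set \<Rightarrow> ('a \<Rightarrow> 'a) \<Rightarrow> (nat \<Rightarrow> 'a set) \<Rightarrow> (nat \<Rightarrow> 'a \<Rightarrow> 'a)
    \<Rightarrow> nat \<Rightarrow> nat set \<Rightarrow> bool" where
  "U2 DB B DA A n I \<longleftrightarrow> (\<forall>i\<in>{1..n} - I. \<forall>x\<in>DA i \<inter> DB.
      B x \<in> DA i \<and> A i x \<in> DB \<and> A i (B x) = B (A i x))"

definition U3 :: "(nat \<Rightarrow> 'a set) \<Rightarrow> (nat \<Rightarrow> 'a \<Rightarrow> 'a) \<Rightarrow> nat \<Rightarrow> nat set \<Rightarrow> bool" where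
  "U3 DA A n I \<longleftrightarrow> (\<forall>i\<in>{1..n} - I. \<forall>j\<in>{1..n}. \<forall>x\<in>DA i \<inter> DA j.
      A j x \<in> DA i \<and> A i x \<in> DA j \<and> A i (A j x) = A j (A i x))"

text \<open>P(A) with domain D(A^{deg P}) = {x. A^j x \<in> D(A) for j < deg P}.\<close>
definition poly_op_dom :: "'a set \<Rightarrow> ('a \<Rightarrow> 'a) \<Rightarrow> complex poly \<Rightarrow> 'a set" where
  "poly_op_dom D f P = {x. \<forall>j<degree P. (f ^^ j) x \<in> D}"

definition poly_op_fun :: "('a::complex_banach \<Rightarrow> 'a) \<Rightarrow> complex poly \<Rightarrow> 'a \<Rightarrow> 'a" where
  "poly_op_fun f P x = (\<Sum>j\<le>degree P. coeff P j *\<^sub>C (f ^^ j) x)"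

definition is_poly_of :: "'a set \<Rightarrow> ('a::complex_banach \<Rightarrow> 'a) \<Rightarrow> 'a set \<Rightarrow> ('a \<Rightarrow> 'a)
    \<Rightarrow> complex poly \<Rightarrow> bool" where
  "is_poly_of DF F D f P \<longleftrightarrow> DF = poly_op_dom D f P \<and> (\<forall>x\<in>DF. F x = poly_op_fun f P x)"

definition poly_of_common_op :: "'a set \<Rightarrow> ('a::complex_banach \<Rightarrow> 'a) \<Rightarrow> (nat \<Rightarrow> 'a set)
    \<Rightarrow> (nat \<Rightarrow> 'a \<Rightarrow> 'a) \<Rightarrow> nat \<Rightarrow> 'a set \<Rightarrow> ('a \<Rightarrow> 'a) \<Rightarrow> bool" where
  "poly_of_common_op DB B DA A n D0 A0 \<longleftrightarrow>
     (\<exists>PB P. is_poly_of DB B D0 A0 PB \<and> (\<forall>i\<in>{1..n}. is_poly_of (DA i) (A i) D0 A0 (P i)))"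

definition hyp_ii :: "('a::complex_banach \<Rightarrow> 'a) \<Rightarrow> 'a set \<Rightarrow> ('a \<Rightarrow> 'a) \<Rightarrow> (nat \<Rightarrow> 'a set)
    \<Rightarrow> (nat \<Rightarrow> 'a \<Rightarrow> 'a) \<Rightarrow> (nat \<Rightarrow> nat \<Rightarrow> complex) \<Rightarrow> nat \<Rightarrow> bool" where
  "hyp_ii C DB B DA A a n \<longleftrightarrow>
     inj_on (Top B A a n) (Tdom DB DA n) \<and>
     range C \<subseteq> Top B A a n ` Tdom DB DA n \<and>
     bounded_clinear (\<lambda>x. Tinv DB DA B A a n (C x)) \<and>
     (\<forall>is. is \<noteq> [] \<and> set is \<subseteq> {1..n} \<longrightarrow>
        (\<forall>x. chain_defined (Tdom DB DA n) (Top B A a n) (Tinv DB DA B A a n) C DA A is x) \<and>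
        bounded_clinear (opchain (Tinv DB DA B A a n) C A is))"

definition S_rec :: "(nat \<Rightarrow> complex) \<Rightarrow> ('a::complex_banach \<Rightarrow> 'a) \<Rightarrow> 'a set \<Rightarrow> ('a \<Rightarrow> 'a)
    \<Rightarrow> (nat \<Rightarrow> 'a set) \<Rightarrow> (nat \<Rightarrow> 'a \<Rightarrow> 'a) \<Rightarrow> (nat \<Rightarrow> nat \<Rightarrow> complex) \<Rightarrow> nat
    \<Rightarrow> (nat \<Rightarrow> 'a \<Rightarrow> 'a) \<Rightarrow> bool" where
  "S_rec k C DB B DA A a n S \<longleftrightarrow>
     S 0 = (\<lambda>x. k 0 *\<^sub>C Tinv DB DA B A a n (C x)) \<and>
     (\<forall>v\<ge>1. S v = (\<lambda>x. Tinv DB DA B A a n (rec_rhs k C A a n S v x)))"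

end

theory Submission
  imports Defs
begin

(* Applying T = B - \<Sum> a_i(0) A_i to S(v) isolates the newest term of every convolution, so an
   existence family satisfies T S(v) = k(v) C + \<Sum> A_i \<Sum>_{j<v} a_i(v-j) S(j); with the
   commutation of S(0) this makes T injective and forces the recursion.  Conversely, under the
   hypotheses of (ii) every S(v) lies in the linear span of the operators
   T^-1 A_{i_1} ... T^-1 A_{i_l} T^-1 C, which gives boundedness, and injectivity of T gives
   uniqueness.  Commutation with A_i propagates along the recursion: through T^-1 under
   (U1)-(U3), and through the regularity of P_T(A) (the leading term can be solved for) when all
   operators are polynomials of one operator A.  In (iii) the recursion yields a discrete
   Volterra inequality for the operator norms whose kernel has mass < 1, hence summability.
   The closed graph theorem is what makes closed operators composed with bounded maps bounded. *)

section \<open>The closed graph theorem\<close>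

lemma Baire_sublevel_closure:
  fixes f :: "'a::banach \<Rightarrow> 'b::real_normed_vector"
  obtains n :: nat where "interior (closure {x. norm (f x) \<le> real n}) \<noteq> {}"
proof -
  define K where "K n = closure {x. norm (f x) \<le> real n}" for n :: nat
  have cover: "\<Union>(range K) = UNIV"
  proof safe
    fix x :: 'a
    obtain n :: nat where "norm (f x) \<le> real n" using real_arch_simple by blast
    then show "x \<in> \<Union>(range K)" unfolding K_def using closure_subset by fastforce
  qed auto
  have "\<exists>n. interior (K n) \<noteq> {}"
  proof (rule ccontr)
    assume "\<not> ?thesis"
    then have "\<And>T. T \<in> range K \<Longrightarrow> closedin euclidean T \<and> euclidean interior_of T = {}"
      by (auto simp: K_def)
    then have "euclidean interior_of \<Union>(range K) = {}"
      by (intro Baire_category_alt) (auto simp: completely_metrizable_space_euclidean)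
    then show False using cover by simp
  qed
  then show ?thesis using that unfolding K_def by blast
qed

lemma linear_small_image_dense_near_0:
  fixes f :: "'a::banach \<Rightarrow> 'b::real_normed_vector"
  assumes lin: "linear f"
  obtains N r where "r > 0" "N \<ge> 0"
    "\<And>y e. norm y < r \<Longrightarrow> e > 0 \<Longrightarrow> \<exists>z. norm (f z) \<le> N \<and> norm (y - z) < e"
proof -
  obtain n x0 where "x0 \<in> interior (closure {x. norm (f x) \<le> real n})"
    using Baire_sublevel_closure[of f] by blast
  then obtain r where r: "r > 0" "ball x0 r \<subseteq> closure {x. norm (f x) \<le> real n}"
    by (meson open_contains_ball_eq open_interior interior_subset subset_trans)
  show ?thesis
  proof (rule that[of r "real n"])
    fix y :: 'a and e :: real
    assume y: "norm y < r" and e: "e > 0"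
    have "x0 + y \<in> closure {x. norm (f x) \<le> real n}" "x0 - y \<in> closure {x. norm (f x) \<le> real n}"
      using y r by (auto simp: dist_norm)
    then obtain z1 z2 where z1: "norm (f z1) \<le> real n" "dist z1 (x0 + y) < e"
      and z2: "norm (f z2) \<le> real n" "dist z2 (x0 - y) < e"
      unfolding closure_approachable using e by blast
    define z where "z = (1/2) *\<^sub>R (z1 - z2)"
    have "f z = (1/2) *\<^sub>R (f z1 - f z2)" unfolding z_def using lin
      by (simp add: linear_scale linear_diff)
    then have "norm (f z) \<le> (1/2) * (norm (f z1) + norm (f z2))"
      by (simp add: norm_triangle_ineq4)
    also have "\<dots> \<le> real n" using z1 z2 by simp
    finally have fz: "norm (f z) \<le> real n" .
    have "(x0 + y - z1) - (x0 - y - z2) = 2 *\<^sub>R (y - z)"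
      unfolding z_def by (simp add: algebra_simps) (simp add: scaleR_2)
    then have "norm (y - z) = (1/2) * norm ((x0 + y - z1) - (x0 - y - z2))" by simp
    also have "\<dots> \<le> (1/2) * (norm (x0 + y - z1) + norm (x0 - y - z2))"
      by (intro mult_left_mono norm_triangle_ineq4) auto
    also have "\<dots> < e" using z1 z2 by (simp add: dist_norm norm_minus_commute)
    finally show "\<exists>z. norm (f z) \<le> real n \<and> norm (y - z) < e" using fz by blast
  qed (use r(1) in simp_all)
qed

lemma linear_small_image_dense:
  fixes f :: "'a::banach \<Rightarrow> 'b::real_normed_vector"
  assumes lin: "linear f"
  obtains M where "M \<ge> 0" "\<And>y e. e > 0 \<Longrightarrow> \<exists>z. norm (f z) \<le> M * norm y \<and> norm (y - z) < e"
proof -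
  obtain r N where r: "r > 0" "N \<ge> 0"
    and approx: "\<And>y e. norm y < r \<Longrightarrow> e > 0 \<Longrightarrow> \<exists>z. norm (f z) \<le> N \<and> norm (y - z) < e"
    using linear_small_image_dense_near_0[OF lin] by metis
  show ?thesis
  proof (rule that[of "2 * N / r"])
    show "0 \<le> 2 * N / r" using r by simp
    fix y :: 'a and e :: real assume e: "e > 0"
    show "\<exists>z. norm (f z) \<le> 2 * N / r * norm y \<and> norm (y - z) < e"
    proof (cases "y = 0")
      case True then show ?thesis using e lin by (intro exI[of _ 0]) (simp add: linear_0)
    next
      case False
      define t where "t = 2 * norm y / r"
      have t: "t > 0" using False r by (simp add: t_def)
      have "norm ((1/t) *\<^sub>R y) = r / 2" using t False r by (simp add: t_def)
      then have "norm ((1/t) *\<^sub>R y) < r" using r by simp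
      then obtain z where z: "norm (f z) \<le> N" "norm ((1/t) *\<^sub>R y - z) < e / t"
        using approx[OF _ divide_pos_pos[OF e t]] by blast
      have "norm (f (t *\<^sub>R z)) = t * norm (f z)" using t lin by (simp add: linear_scale)
      also have "\<dots> \<le> t * N" using z t by simp
      also have "\<dots> = 2 * N / r * norm y" by (simp add: t_def)
      finally have fz: "norm (f (t *\<^sub>R z)) \<le> 2 * N / r * norm y" .
      have "y - t *\<^sub>R z = t *\<^sub>R ((1/t) *\<^sub>R y - z)" using t by (simp add: algebra_simps)
      then have "norm (y - t *\<^sub>R z) = t * norm ((1/t) *\<^sub>R y - z)" using t by simp
      also have "\<dots> < e" using z t by (simp add: field_simps)
      finally show ?thesis using fz by blast
    qed
  qed
qed

lemma linear_approx_series: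
  fixes f :: "'a::banach \<Rightarrow> 'b::real_normed_vector"
  assumes lin: "linear f" and M: "M \<ge> 0"
    and approx: "\<And>y e. e > 0 \<Longrightarrow> \<exists>z. norm (f z) \<le> M * norm y \<and> norm (y - z) < e"
  obtains z where "z sums x" "\<And>k. norm (f (z k)) \<le> M * norm x * (1/2) ^ k"
proof (cases "x = 0")
  case True
  show ?thesis by (rule that[of "\<lambda>_. 0"]) (use True lin in \<open>simp_all add: linear_0\<close>)
next
  case False
  define g where "g y e = (SOME z. norm (f z) \<le> M * norm y \<and> norm (y - z) < e)" for y e
  have g: "norm (f (g y e)) \<le> M * norm y \<and> norm (y - g y e) < e" if "e > 0" for y e
    unfolding g_def by (rule someI_ex) (use approx that in blast)
  define eps where "eps k = norm x / 2 ^ Suc k" for k :: nat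
  have eps: "eps k > 0" for k using False by (simp add: eps_def)
  define u where "u = rec_nat x (\<lambda>k uk. uk - g uk (eps k))"
  define z where "z k = g (u k) (eps k)" for k
  have u0: "u 0 = x" and uSuc: "u (Suc k) = u k - z k" for k by (simp_all add: u_def z_def)
  have norm_u: "norm (u k) \<le> norm x / 2 ^ k" for k
  proof (cases k)
    case (Suc j)
    have "norm (u (Suc j)) < eps j" using g[OF eps, of "u j" j] by (simp add: uSuc z_def)
    then show ?thesis using Suc by (simp add: eps_def)
  qed (simp add: u0)
  have "norm (f (z k)) \<le> M * norm x * (1/2) ^ k" for k
  proof -
    have "norm (f (z k)) \<le> M * norm (u k)" using g[OF eps, of "u k" k] by (simp add: z_def)
    also have "\<dots> \<le> M * (norm x / 2 ^ k)" using norm_u M by (intro mult_left_mono) auto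
    also have "\<dots> = M * norm x * (1/2) ^ k" by (simp add: power_one_over)
    finally show ?thesis .
  qed
  moreover have "z sums x"
  proof -
    have "(\<Sum>k<m. z k) = x - u m" for m
      by (induction m) (simp_all add: u0 uSuc)
    moreover have "(\<lambda>k. norm (u k)) \<longlonglongrightarrow> 0"
    proof (rule Lim_null_comparison)
      show "\<forall>\<^sub>F k in sequentially. norm (norm (u k)) \<le> norm x * (1/2::real) ^ k"
        by (rule always_eventually) (use norm_u in \<open>simp add: power_one_over\<close>)
      show "(\<lambda>k. norm x * (1/2::real) ^ k) \<longlonglongrightarrow> 0"
        using tendsto_mult[OF tendsto_const[of "norm x"] LIMSEQ_power_zero[of "1/2::real"]] by simp
    qed
    ultimately show ?thesis
      unfolding sums_def using tendsto_diff[OF tendsto_const[of x] tendsto_norm_zero_cancel] by simp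
  qed
  ultimately show ?thesis using that by blast
qed

text \<open>Closedness of the graph identifies \<open>f x\<close> with \<open>\<Sum> f z\<^sub>k\<close>.\<close>

theorem closed_graph_imp_bounded_linear:
  fixes f :: "'a::banach \<Rightarrow> 'b::banach"
  assumes lin: "linear f" and closed_graph: "closed (range (\<lambda>x. (x, f x)))"
  shows "bounded_linear f"
proof -
  obtain M where M: "M \<ge> 0"
    and approx: "\<And>y e. e > 0 \<Longrightarrow> \<exists>z. norm (f z) \<le> M * norm y \<and> norm (y - z) < e"
    using linear_small_image_dense[OF lin] by metis
  have "norm (f x) \<le> norm x * (2 * M)" for x
  proof -
    obtain z where z: "z sums x" and fz: "\<And>k. norm (f (z k)) \<le> M * norm x * (1/2) ^ k"
      using linear_approx_series[OF lin M approx] by metis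
    have geometric: "summable (\<lambda>k. M * norm x * (1/2::real) ^ k)"
      by (intro summable_mult summable_geometric) simp
    have summable_fz: "summable (\<lambda>k. norm (f (z k)))"
      by (rule summable_comparison_test[OF _ geometric]) (use fz in auto)
    have "(\<lambda>m. f (\<Sum>k<m. z k)) \<longlonglongrightarrow> (\<Sum>k. f (z k))"
      using summable_LIMSEQ[OF summable_norm_cancel[OF summable_fz]] lin by (simp add: linear_sum)
    then have "(\<lambda>m. ((\<Sum>k<m. z k), f (\<Sum>k<m. z k))) \<longlonglongrightarrow> (x, \<Sum>k. f (z k))"
      using z unfolding sums_def by (rule tendsto_Pair[rotated])
    then have "(x, \<Sum>k. f (z k)) \<in> range (\<lambda>x. (x, f x))"
      by (rule closed_sequentially[OF closed_graph, rotated]) auto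
    then have "norm (f x) = norm (\<Sum>k. f (z k))" by auto
    also have "\<dots> \<le> (\<Sum>k. norm (f (z k)))" by (rule summable_norm[OF summable_fz])
    also have "\<dots> \<le> (\<Sum>k. M * norm x * (1/2) ^ k)" by (rule suminf_le[OF fz summable_fz geometric])
    also have "\<dots> = norm x * (2 * M)" by (simp add: suminf_mult suminf_geometric)
    finally show ?thesis .
  qed
  then show ?thesis
    by (intro bounded_linear_intro[of f "2 * M"]) (simp_all add: linear_add[OF lin] linear_scale[OF lin])
qed

declare scaleC_one[simp]

lemma scaleC_zero_left[simp]: "0 *\<^sub>C x = (0::'a::complex_banach)"
proof -
  have "0 *\<^sub>C x = 0 *\<^sub>C x + 0 *\<^sub>C x" using scaleC_add_left[of 0 0 x] by simp
  then show ?thesis by simp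
qed

lemma scaleC_zero_right[simp]: "c *\<^sub>C (0::'a::complex_banach) = 0"
proof -
  have "c *\<^sub>C (0::'a) = c *\<^sub>C 0 + c *\<^sub>C 0" using scaleC_add_right[of c "0::'a" 0] by simp
  then show ?thesis by simp
qed

lemma scaleC_minus_left: "(- c) *\<^sub>C x = - (c *\<^sub>C (x::'a::complex_banach))"
proof -
  have "c *\<^sub>C x + (- c) *\<^sub>C x = 0" using scaleC_add_left[of c "-c" x] by simp
  then show ?thesis by (simp add: eq_neg_iff_add_eq_0 add.commute)
qed

lemma scaleC_minus_right: "c *\<^sub>C (- x) = - (c *\<^sub>C (x::'a::complex_banach))"
proof -
  have "c *\<^sub>C x + c *\<^sub>C (- x) = 0" using scaleC_add_right[of c x "-x"] by simp
  then show ?thesis by (simp add: eq_neg_iff_add_eq_0 add.commute)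
qed

lemma scaleC_diff_right: "c *\<^sub>C (x - y) = c *\<^sub>C x - c *\<^sub>C (y::'a::complex_banach)"
  using scaleC_add_right[of c x "-y"] by (simp add: scaleC_minus_right)

lemma scaleC_diff_left: "(c - d) *\<^sub>C x = c *\<^sub>C x - d *\<^sub>C (x::'a::complex_banach)"
  using scaleC_add_left[of c "-d" x] by (simp add: scaleC_minus_left)

lemma scaleC_sum_right: "c *\<^sub>C (\<Sum>j\<in>J. g j) = (\<Sum>j\<in>J. c *\<^sub>C (g j::'a::complex_banach))"
  by (induction J rule: infinite_finite_induct) (simp_all add: scaleC_add_right)

lemma scaleC_sum_left: "(\<Sum>j\<in>J. g j) *\<^sub>C x = (\<Sum>j\<in>J. g j *\<^sub>C (x::'a::complex_banach))"
  by (induction J rule: infinite_finite_induct) (simp_all add: scaleC_add_left)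

lemma scaleC_eq_0_iff[simp]: "c *\<^sub>C x = 0 \<longleftrightarrow> c = 0 \<or> (x::'a::complex_banach) = 0"
proof -
  have "c *\<^sub>C x = 0 \<longleftrightarrow> norm (c *\<^sub>C x) = 0" by simp
  then show ?thesis by (simp add: norm_scaleC)
qed

lemma scaleC_inverse_cancel[simp]:
  "c \<noteq> 0 \<Longrightarrow> inverse c *\<^sub>C (c *\<^sub>C x) = (x::'a::complex_banach)"
  "c \<noteq> 0 \<Longrightarrow> c *\<^sub>C (inverse c *\<^sub>C x) = (x::'a::complex_banach)"
  by (simp_all add: scaleC_scaleC)

lemma scaleC_left_cancel: "c \<noteq> 0 \<Longrightarrow> c *\<^sub>C x = c *\<^sub>C y \<Longrightarrow> x = (y::'a::complex_banach)"
  by (metis scaleC_inverse_cancel(1))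

lemma bounded_linear_scaleC: "bounded_linear (\<lambda>x::'a::complex_banach. c *\<^sub>C x)"
  by (rule bounded_linear_intro[of _ "cmod c"])
    (simp_all add: scaleC_add_right scaleR_scaleC scaleC_scaleC mult.commute norm_scaleC)

lemma bounded_clinear_bounded_linear: "bounded_clinear f \<Longrightarrow> bounded_linear f"
  by (simp add: bounded_clinear_def)

lemma bounded_clinear_simps:
  assumes "bounded_clinear f"
  shows "f (x + y) = f x + f y" "f (c *\<^sub>C x) = c *\<^sub>C f x" "f 0 = 0" "f (- x) = - f x"
    "f (x - y) = f x - f y"
  using assms unfolding bounded_clinear_def by (simp_all add: linear_simps)

lemma bounded_clinear_sum_apply: "bounded_clinear f \<Longrightarrow> f (\<Sum>j\<in>J. g j) = (\<Sum>j\<in>J. f (g j))"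
  by (induction J rule: infinite_finite_induct) (simp_all add: bounded_clinear_simps)

lemma onorm_bounded_clinear: "bounded_clinear f \<Longrightarrow> norm (f x) \<le> onorm f * norm x"
  by (rule onorm[OF bounded_clinear_bounded_linear])

lemma onorm_bounded_clinear_nonneg: "bounded_clinear f \<Longrightarrow> 0 \<le> onorm f"
  by (rule onorm_pos_le[OF bounded_clinear_bounded_linear])

lemma bounded_clinear_zero: "bounded_clinear (\<lambda>x. 0)"
  by (simp add: bounded_clinear_def)

lemma bounded_clinear_compose:
  "bounded_clinear f \<Longrightarrow> bounded_clinear g \<Longrightarrow> bounded_clinear (\<lambda>x. f (g x))"
  unfolding bounded_clinear_def using bounded_linear_compose[of f g] by simp

lemma bounded_clinear_add:
  "bounded_clinear f \<Longrightarrow> bounded_clinear g \<Longrightarrow> bounded_clinear (\<lambda>x. f x + g x)"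
  unfolding bounded_clinear_def using bounded_linear_add[of f g] by (simp add: scaleC_add_right)

lemma bounded_clinear_scaleC: "bounded_clinear f \<Longrightarrow> bounded_clinear (\<lambda>x. c *\<^sub>C f x)"
  unfolding bounded_clinear_def
  using bounded_linear_compose[OF bounded_linear_scaleC, of f c] by (simp add: scaleC_scaleC mult.commute)

lemma bounded_clinear_diff:
  "bounded_clinear f \<Longrightarrow> bounded_clinear g \<Longrightarrow> bounded_clinear (\<lambda>x. f x - g x)"
  using bounded_clinear_add[OF _ bounded_clinear_scaleC, of f g "-1"]
  by (simp add: scaleC_minus_left)

lemma bounded_clinear_sum:
  "(\<And>i. i \<in> I \<Longrightarrow> bounded_clinear (g i)) \<Longrightarrow> bounded_clinear (\<lambda>x. \<Sum>i\<in>I. g i x)"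
  by (induction I rule: infinite_finite_induct) (simp_all add: bounded_clinear_zero bounded_clinear_add)

lemma onorm_compose_le:
  "bounded_clinear f \<Longrightarrow> bounded_clinear g \<Longrightarrow> onorm (\<lambda>x. f (g x)) \<le> onorm f * onorm g"
  using onorm_compose[OF bounded_clinear_bounded_linear bounded_clinear_bounded_linear, of f g]
  by (simp add: o_def)

definition csubspace :: "'a::complex_banach set \<Rightarrow> bool" where
  "csubspace D \<longleftrightarrow> 0 \<in> D \<and> (\<forall>x\<in>D. \<forall>y\<in>D. x + y \<in> D) \<and> (\<forall>c. \<forall>x\<in>D. c *\<^sub>C x \<in> D)"

lemma csubspace_0: "csubspace D \<Longrightarrow> 0 \<in> D"
  by (simp add: csubspace_def)

lemma csubspace_add: "csubspace D \<Longrightarrow> x \<in> D \<Longrightarrow> y \<in> D \<Longrightarrow> x + y \<in> D"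
  by (simp add: csubspace_def)

lemma csubspace_scaleC: "csubspace D \<Longrightarrow> x \<in> D \<Longrightarrow> c *\<^sub>C x \<in> D"
  by (simp add: csubspace_def)

lemma csubspace_diff: "csubspace D \<Longrightarrow> x \<in> D \<Longrightarrow> y \<in> D \<Longrightarrow> x - y \<in> D"
  using csubspace_add[of D x "(-1) *\<^sub>C y"] csubspace_scaleC[of D y "-1"]
  by (simp add: scaleC_minus_left)

lemma csubspace_sum:
  assumes "csubspace D" "\<And>j. j \<in> J \<Longrightarrow> g j \<in> D"
  shows "(\<Sum>j\<in>J. g j) \<in> D"
  using assms(2) by (induction J rule: infinite_finite_induct) (simp_all add: assms(1) csubspace_0 csubspace_add)

lemma csubspace_Int: "csubspace D \<Longrightarrow> csubspace E \<Longrightarrow> csubspace (D \<inter> E)"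
  by (simp add: csubspace_def)

lemma csubspace_INT: "(\<And>i. i \<in> I \<Longrightarrow> csubspace (D i)) \<Longrightarrow> csubspace (\<Inter>i\<in>I. D i)"
  unfolding csubspace_def by blast

lemma clinear_op_csubspace: "clinear_op D f \<Longrightarrow> csubspace D"
  by (simp add: clinear_op_def csubspace_def)

lemma clinear_op_add: "clinear_op D f \<Longrightarrow> x \<in> D \<Longrightarrow> y \<in> D \<Longrightarrow> f (x + y) = f x + f y"
  by (simp add: clinear_op_def)

lemma clinear_op_scaleC: "clinear_op D f \<Longrightarrow> x \<in> D \<Longrightarrow> f (c *\<^sub>C x) = c *\<^sub>C f x"
  by (simp add: clinear_op_def)

lemma clinear_op_0: "clinear_op D f \<Longrightarrow> f 0 = 0"
  using clinear_op_scaleC[of D f 0 0] by (simp add: clinear_op_def)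

lemma clinear_op_diff: "clinear_op D f \<Longrightarrow> x \<in> D \<Longrightarrow> y \<in> D \<Longrightarrow> f (x - y) = f x - f y"
  using clinear_op_add[of D f x "(-1) *\<^sub>C y"] clinear_op_scaleC[of D f y "-1"]
    csubspace_scaleC[OF clinear_op_csubspace, of D f y "-1"]
  by (simp add: scaleC_minus_left)

lemma clinear_op_sum:
  assumes "clinear_op D f" "\<And>j. j \<in> J \<Longrightarrow> g j \<in> D"
  shows "f (\<Sum>j\<in>J. g j) = (\<Sum>j\<in>J. f (g j))"
  using assms(2)
proof (induction J rule: infinite_finite_induct)
  case (insert i F)
  have "(\<Sum>j\<in>F. g j) \<in> D" using insert by (intro csubspace_sum[OF clinear_op_csubspace[OF assms(1)]]) auto
  then show ?case using insert by (simp add: clinear_op_add[OF assms(1)])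
qed (simp_all add: clinear_op_0[OF assms(1)])

lemma clinear_op_image_csubspace:
  assumes f: "clinear_op D f"
  shows "csubspace (f ` D)"
  unfolding csubspace_def
proof (intro conjI ballI allI)
  have "0 \<in> D" using f by (simp add: clinear_op_def)
  then show "0 \<in> f ` D" using clinear_op_0[OF f] by (metis image_eqI)
next
  fix u v assume "u \<in> f ` D" "v \<in> f ` D"
  then obtain x y where "x \<in> D" "y \<in> D" "u = f x" "v = f y" by blast
  then have "x + y \<in> D" "u + v = f (x + y)" using f by (simp_all add: clinear_op_def)
  then show "u + v \<in> f ` D" by blast
next
  fix c u assume "u \<in> f ` D"
  then obtain x where "x \<in> D" "u = f x" by blast
  then have "c *\<^sub>C x \<in> D" "c *\<^sub>C u = f (c *\<^sub>C x)" using f by (simp_all add: clinear_op_def)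
  then show "c *\<^sub>C u \<in> f ` D" by blast
qed

lemma clinear_op_the_inv_into:
  assumes f: "clinear_op D f" and inj: "inj_on f D"
  shows "clinear_op (f ` D) (the_inv_into D f)"
proof -
  have inv: "the_inv_into D f (f x) = x" if "x \<in> D" for x
    using the_inv_into_f_f[OF inj that] .
  show ?thesis
    unfolding clinear_op_def
  proof (intro conjI ballI allI)
    show "0 \<in> f ` D" using clinear_op_image_csubspace[OF f] by (rule csubspace_0)
  next
    fix u v assume "u \<in> f ` D" "v \<in> f ` D"
    then obtain x y where xy: "x \<in> D" "y \<in> D" and uv: "u = f x" "v = f y" by blast
    then have "x + y \<in> D" "u + v = f (x + y)" using f by (simp_all add: clinear_op_def)
    then show "u + v \<in> f ` D" "the_inv_into D f (u + v) = the_inv_into D f u + the_inv_into D f v"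
      using xy uv by (simp_all add: inv)
  next
    fix c u assume "u \<in> f ` D"
    then obtain x where x: "x \<in> D" and u: "u = f x" by blast
    then have "c *\<^sub>C x \<in> D" "c *\<^sub>C u = f (c *\<^sub>C x)" using f by (simp_all add: clinear_op_def)
    then show "c *\<^sub>C u \<in> f ` D" "the_inv_into D f (c *\<^sub>C u) = c *\<^sub>C the_inv_into D f u"
      using x u by (simp_all add: inv)
  qed
qed

lemma closed_op_compose_bounded_clinear:
  assumes closed: "closed_op D F" and g: "bounded_clinear g" and gD: "\<And>x. g x \<in> D"
  shows "bounded_clinear (\<lambda>x. F (g x))"
proof -
  have F: "clinear_op D F" using closed by (simp add: closed_op_def)
  have scaleC: "F (g (c *\<^sub>C x)) = c *\<^sub>C F (g x)" for c x
    using gD by (simp add: bounded_clinear_simps[OF g] clinear_op_scaleC[OF F])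
  have "linear (\<lambda>x. F (g x))"
    by (rule linearI) (simp_all add: gD bounded_clinear_simps[OF g] clinear_op_add[OF F] clinear_op_scaleC[OF F] scaleR_scaleC)
  moreover have "closed (range (\<lambda>x. (x, F (g x))))"
  proof (rule closed_sequential_limits[THEN iffD2], intro allI impI, elim conjE)
    fix s l
    assume s: "\<forall>n. s n \<in> range (\<lambda>x. (x, F (g x)))" and l: "s \<longlonglongrightarrow> l"
    define x where "x n = fst (s n)" for n
    have s_eq: "s n = (x n, F (g (x n)))" for n
    proof -
      obtain y where "s n = (y, F (g y))" using s by blast
      then show ?thesis by (simp add: x_def)
    qed
    have "(\<lambda>n. g (x n)) \<longlonglongrightarrow> g (fst l)"
      unfolding x_def by (rule bounded_linear.tendsto[OF bounded_clinear_bounded_linear[OF g] tendsto_fst[OF l]])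
    moreover have "(\<lambda>n. F (g (x n))) \<longlonglongrightarrow> snd l"
      using tendsto_snd[OF l] by (simp add: s_eq)
    ultimately have lim: "(\<lambda>n. (g (x n), F (g (x n)))) \<longlonglongrightarrow> (g (fst l), snd l)"
      by (rule tendsto_Pair)
    have closed_graph: "closed ((\<lambda>x. (x, F x)) ` D)" using closed by (simp add: closed_op_def)
    have "(g (fst l), snd l) \<in> (\<lambda>x. (x, F x)) ` D"
      by (rule closed_sequentially[OF closed_graph _ lim]) (use gD in auto)
    then show "l \<in> range (\<lambda>x. (x, F (g x)))"
      by (auto intro!: image_eqI[of _ _ "fst l"] simp: prod_eq_iff)
  qed
  ultimately have "bounded_linear (\<lambda>x. F (g x))"
    by (rule closed_graph_imp_bounded_linear)
  then show ?thesis unfolding bounded_clinear_def using scaleC by blast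
qed

lemma clinear_op_inj_on_iff:
  assumes f: "clinear_op D f"
  shows "inj_on f D \<longleftrightarrow> (\<forall>x\<in>D. f x = 0 \<longrightarrow> x = 0)"
proof
  assume "inj_on f D"
  then show "\<forall>x\<in>D. f x = 0 \<longrightarrow> x = 0"
    using f clinear_op_0[OF f] by (auto simp: clinear_op_def inj_on_def)
next
  assume ker: "\<forall>x\<in>D. f x = 0 \<longrightarrow> x = 0"
  show "inj_on f D"
  proof (rule inj_onI)
    fix x y assume "x \<in> D" "y \<in> D" "f x = f y"
    then have "x - y \<in> D" "f (x - y) = 0"
      using csubspace_diff[OF clinear_op_csubspace[OF f]] clinear_op_diff[OF f] by simp_all
    then have "x - y = 0" using ker by blast
    then show "x = y" by simp
  qed
qed

lemma opchain_Nil_eq: "opchain Ti C A [] = (\<lambda>x. Ti (C x))"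
  and opchain_Cons_eq: "opchain Ti C A (i # is) = (\<lambda>x. Ti (A i (opchain Ti C A is x)))"
  by (simp_all add: fun_eq_iff)

lemma conv0_eq_tail_sum: "conv0 b S v x = b 0 *\<^sub>C S v x + tail_sum b S v x"
  by (simp add: conv0_def tail_sum_def atLeast0AtMost lessThan_Suc_atMost[symmetric] add.commute)

lemma tail_sum_0[simp]: "tail_sum b S 0 x = 0"
  by (simp add: tail_sum_def)

locale multiterm_setting =
  fixes n :: nat and DB :: "'a::complex_banach set" and B :: "'a \<Rightarrow> 'a"
    and DA :: "nat \<Rightarrow> 'a set" and A :: "nat \<Rightarrow> 'a \<Rightarrow> 'a"
    and C :: "'a \<Rightarrow> 'a" and k :: "nat \<Rightarrow> complex" and a :: "nat \<Rightarrow> nat \<Rightarrow> complex"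
  assumes B_closed: "closed_op DB B"
    and A_closed: "\<forall>i\<in>{1..n}. closed_op (DA i) (A i)"
    and C_bounded: "bounded_clinear C" and C_inj: "inj C"
    and k0: "k 0 \<noteq> 0"
    and a0: "\<forall>i\<in>{1..n}. a i 0 \<noteq> 0"
begin

abbreviation "D \<equiv> Tdom DB DA n"
abbreviation "T \<equiv> Top B A a n"
abbreviation "Ti \<equiv> Tinv DB DA B A a n"
abbreviation "exist_fam S \<equiv> disc_exist_fam k C DB B DA A a n S"
abbreviation "rhs S v x \<equiv> rec_rhs k C A a n S v x"

lemma clinear_op_B: "clinear_op DB B"
  using B_closed by (simp add: closed_op_def)

lemma clinear_op_A: "i \<in> {1..n} \<Longrightarrow> clinear_op (DA i) (A i)"
  using A_closed by (simp add: closed_op_def)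

lemma csubspace_DA: "i \<in> {1..n} \<Longrightarrow> csubspace (DA i)"
  by (rule clinear_op_csubspace[OF clinear_op_A])

lemma Tdom_iff: "x \<in> D \<longleftrightarrow> x \<in> DB \<and> (\<forall>i\<in>{1..n}. x \<in> DA i)"
  by (auto simp: Tdom_def)

lemma Tdom_DB: "x \<in> D \<Longrightarrow> x \<in> DB"
  by (simp add: Tdom_iff)

lemma Tdom_DA: "x \<in> D \<Longrightarrow> i \<in> {1..n} \<Longrightarrow> x \<in> DA i"
  by (simp add: Tdom_iff)

lemma csubspace_Tdom: "csubspace D"
  unfolding Tdom_def
  by (intro csubspace_Int csubspace_INT clinear_op_csubspace[OF clinear_op_B] csubspace_DA)

lemma clinear_op_T: "clinear_op D T"
  unfolding clinear_op_def
proof (intro conjI ballI allI)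
  show "0 \<in> D" by (rule csubspace_0[OF csubspace_Tdom])
next
  fix x y assume x: "x \<in> D" and y: "y \<in> D"
  show "x + y \<in> D" by (rule csubspace_add[OF csubspace_Tdom x y])
  have "A i (x + y) = A i x + A i y" if "i \<in> {1..n}" for i
    using x y that by (simp add: clinear_op_add[OF clinear_op_A] Tdom_DA)
  then show "T (x + y) = T x + T y"
    using x y by (simp add: Top_def clinear_op_add[OF clinear_op_B] Tdom_DB scaleC_add_right
        sum.distrib algebra_simps)
next
  fix c x assume x: "x \<in> D"
  show "c *\<^sub>C x \<in> D" by (rule csubspace_scaleC[OF csubspace_Tdom x])
  have "A i (c *\<^sub>C x) = c *\<^sub>C A i x" if "i \<in> {1..n}" for i
    using x that by (simp add: clinear_op_scaleC[OF clinear_op_A] Tdom_DA)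
  then show "T (c *\<^sub>C x) = c *\<^sub>C T x"
    using x by (simp add: Top_def clinear_op_scaleC[OF clinear_op_B] Tdom_DB scaleC_diff_right
        scaleC_sum_right scaleC_scaleC mult.commute)
qed

lemma csubspace_range_T: "csubspace (T ` D)"
  by (rule clinear_op_image_csubspace[OF clinear_op_T])

lemma rec_rhs_0: "rhs S 0 x = k 0 *\<^sub>C C x"
  by (simp add: rec_rhs_def clinear_op_0[OF clinear_op_A])

context
  assumes T_inj: "inj_on T D"
begin

lemma clinear_op_Tinv: "clinear_op (T ` D) Ti"
  unfolding Tinv_def by (rule clinear_op_the_inv_into[OF clinear_op_T T_inj])

lemma Tinv_T: "x \<in> D \<Longrightarrow> Ti (T x) = x"
  unfolding Tinv_def by (rule the_inv_into_f_f[OF T_inj])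

lemma T_Tinv: "z \<in> T ` D \<Longrightarrow> T (Ti z) = z"
  unfolding Tinv_def by (rule f_the_inv_into_f[OF T_inj])

lemma Tinv_in_Tdom: "z \<in> T ` D \<Longrightarrow> Ti z \<in> D"
  unfolding Tinv_def by (rule the_inv_into_into[OF T_inj]) auto

end

lemma existence_familyD:
  assumes "exist_fam S"
  shows "bounded_clinear (S v)" "S v x \<in> DB"
    "i \<in> {1..n} \<Longrightarrow> conv0 (a i) S v x \<in> DA i"
    "i \<in> {1..n} \<Longrightarrow> bounded_clinear (\<lambda>x. A i (conv0 (a i) S v x))"
    "B (S v x) = k v *\<^sub>C C x + (\<Sum>i=1..n. A i (conv0 (a i) S v x))"
  using assms by (simp_all add: disc_exist_fam_def)

context
  fixes S :: "nat \<Rightarrow> 'a \<Rightarrow> 'a"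
  assumes F: "exist_fam S"
begin

text \<open>Since \<open>a\<^sub>i(0) \<noteq> 0\<close>, \<open>S(v)x\<close> is recovered from \<open>(a\<^sub>i \<ast>\<^sub>0 S)(v)x\<close> and the earlier \<open>S(j)x\<close>.\<close>

lemma existence_family_in_DA: "i \<in> {1..n} \<Longrightarrow> S v x \<in> DA i"
proof (induction v arbitrary: x rule: less_induct)
  case (less v)
  note DA = csubspace_DA[OF less.prems]
  have "tail_sum (a i) S v x \<in> DA i"
    unfolding tail_sum_def using less by (intro csubspace_sum[OF DA] csubspace_scaleC[OF DA]) auto
  then have "a i 0 *\<^sub>C S v x \<in> DA i"
    using existence_familyD(3)[OF F less.prems] csubspace_diff[OF DA]
    by (metis conv0_eq_tail_sum add_diff_cancel_right')
  then have "inverse (a i 0) *\<^sub>C (a i 0 *\<^sub>C S v x) \<in> DA i" by (rule csubspace_scaleC[OF DA])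
  then show ?case using a0 less.prems by simp
qed

lemma existence_family_in_Tdom: "S v x \<in> D"
  using existence_familyD(2)[OF F] existence_family_in_DA by (simp add: Tdom_iff)

lemma existence_family_tail_sum_in_DA: "i \<in> {1..n} \<Longrightarrow> tail_sum (a i) S v x \<in> DA i"
  unfolding tail_sum_def using existence_family_in_DA
  by (intro csubspace_sum[OF csubspace_DA] csubspace_scaleC[OF csubspace_DA]) auto

lemma existence_family_A_conv0:
  "i \<in> {1..n} \<Longrightarrow> A i (conv0 (a i) S v x) = a i 0 *\<^sub>C A i (S v x) + A i (tail_sum (a i) S v x)"
  by (simp add: conv0_eq_tail_sum clinear_op_add[OF clinear_op_A] clinear_op_scaleC[OF clinear_op_A]
      existence_family_in_DA existence_family_tail_sum_in_DA csubspace_scaleC[OF csubspace_DA])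

lemma existence_family_T: "T (S v x) = rhs S v x"
  by (simp add: Top_def existence_familyD(5)[OF F] existence_family_A_conv0 sum.distrib rec_rhs_def)

lemma existence_family_A_bounded: "i \<in> {1..n} \<Longrightarrow> bounded_clinear (\<lambda>x. A i (S v x))"
proof (induction v rule: less_induct)
  case (less v)
  have "A i (tail_sum (a i) S v x) = (\<Sum>j<v. a i (v - j) *\<^sub>C A i (S j x))" for x
    unfolding tail_sum_def using less.prems
    by (simp add: clinear_op_sum[OF clinear_op_A] clinear_op_scaleC[OF clinear_op_A]
        existence_family_in_DA csubspace_scaleC[OF csubspace_DA])
  moreover have "bounded_clinear (\<lambda>x. \<Sum>j<v. a i (v - j) *\<^sub>C A i (S j x))"
    using less by (intro bounded_clinear_sum bounded_clinear_scaleC) auto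
  ultimately have "bounded_clinear (\<lambda>x. A i (tail_sum (a i) S v x))" by simp
  then have "bounded_clinear (\<lambda>x. inverse (a i 0) *\<^sub>C (A i (conv0 (a i) S v x) - A i (tail_sum (a i) S v x)))"
    by (intro bounded_clinear_scaleC bounded_clinear_diff existence_familyD(4)[OF F less.prems])
  moreover have "inverse (a i 0) *\<^sub>C (A i (conv0 (a i) S v x) - A i (tail_sum (a i) S v x)) = A i (S v x)" for x
    using a0 less.prems by (simp add: existence_family_A_conv0)
  ultimately show ?case by simp
qed

text \<open>Applying \<open>S(0)\<close> to \<open>T x\<close> and commuting gives \<open>S(0) T x = T S(0) x = k(0) C x\<close>;
  injectivity of \<open>C\<close> does the rest.\<close>

lemma existence_family_T_inj:
  assumes commute: "\<forall>x\<in>D. S 0 (B x) = B (S 0 x) \<and> (\<forall>i\<in>{1..n}. S 0 (A i x) = A i (S 0 x))"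
  shows "inj_on T D"
  unfolding clinear_op_inj_on_iff[OF clinear_op_T]
proof (intro ballI impI)
  fix x assume x: "x \<in> D" and Tx: "T x = 0"
  note S0 = bounded_clinear_simps[OF existence_familyD(1)[OF F]]
  have "S 0 (T x) = T (S 0 x)"
    using commute x by (simp add: Top_def S0 bounded_clinear_sum_apply[OF existence_familyD(1)[OF F]])
  then have "k 0 *\<^sub>C C x = 0" using Tx existence_family_T[of 0 x] by (simp add: rec_rhs_0 S0)
  then have "C x = C 0" using k0 bounded_clinear_simps(3)[OF C_bounded] by simp
  then show "x = 0" using C_inj by (meson injD)
qed

end

lemma existence_family_necessary_conditions:
  "\<forall>S. exist_fam S \<and> (\<forall>x\<in>D. S 0 (B x) = B (S 0 x) \<and> (\<forall>i\<in>{1..n}. S 0 (A i x) = A i (S 0 x)))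
     \<longrightarrow> inj_on T D \<and> range C \<subseteq> T ` D \<and> bounded_clinear (\<lambda>x. Ti (C x)) \<and>
         S 0 = (\<lambda>x. k 0 *\<^sub>C Ti (C x)) \<and>
         (\<forall>v\<ge>1. \<forall>x. (\<forall>i\<in>{1..n}. tail_sum (a i) S v x \<in> DA i) \<and>
                    rhs S v x \<in> T ` D \<and> S v x = Ti (rhs S v x)) \<and>
         (\<forall>i\<in>{1..n}. \<forall>v. range (S v) \<subseteq> DA i \<and> bounded_clinear (\<lambda>x. A i (S v x)))"
  (is "\<forall>S. _ \<longrightarrow> ?conclusion S")
proof (intro allI impI, elim conjE)
  fix S assume F: "exist_fam S"
    and commute: "\<forall>x\<in>D. S 0 (B x) = B (S 0 x) \<and> (\<forall>i\<in>{1..n}. S 0 (A i x) = A i (S 0 x))"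
  note S0 = bounded_clinear_simps[OF existence_familyD(1)[OF F, of 0]]
  have inj: "inj_on T D" by (rule existence_family_T_inj[OF F commute])
  have rhs_range: "rhs S v x \<in> T ` D" and Tinv_rhs: "Ti (rhs S v x) = S v x" for v x
    using existence_family_T[OF F, of v x, symmetric] existence_family_in_Tdom[OF F, of v x] Tinv_T[OF inj]
    by auto
  have C_eq: "C x = rhs S 0 (inverse (k 0) *\<^sub>C x)" for x
    using k0 by (simp add: rec_rhs_0 bounded_clinear_simps[OF C_bounded])
  then have Tinv_C: "Ti (C x) = inverse (k 0) *\<^sub>C S 0 x" for x
    by (simp add: Tinv_rhs S0)
  have "bounded_clinear (\<lambda>x. inverse (k 0) *\<^sub>C S 0 x)"
    by (rule bounded_clinear_scaleC[OF existence_familyD(1)[OF F]])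
  then have "bounded_clinear (\<lambda>x. Ti (C x))" by (simp add: Tinv_C)
  moreover have "S 0 = (\<lambda>x. k 0 *\<^sub>C Ti (C x))"
    using k0 by (simp add: Tinv_C)
  moreover have "range C \<subseteq> T ` D"
    using C_eq rhs_range by (metis image_subsetI)
  ultimately show "?conclusion S"
    using inj rhs_range Tinv_rhs existence_family_tail_sum_in_DA[OF F]
      existence_family_in_DA[OF F] existence_family_A_bounded[OF F]
    by (simp add: image_subset_iff)
qed

section \<open>The family defined by the recursion\<close>

lemma hyp_iiD:
  assumes "hyp_ii C DB B DA A a n"
  shows "inj_on T D" "C x \<in> T ` D" "bounded_clinear (\<lambda>x. Ti (C x))"
  using assms by (auto simp: hyp_ii_def)

lemma hyp_ii_opchain:
  assumes hyp: "hyp_ii C DB B DA A a n" and "is": "set is \<subseteq> {1..n}"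
  shows "bounded_clinear (opchain Ti C A is)" "opchain Ti C A is x \<in> D"
    "i \<in> {1..n} \<Longrightarrow> A i (opchain Ti C A is x) \<in> T ` D"
proof -
  have chain: "is' \<noteq> [] \<Longrightarrow> set is' \<subseteq> {1..n} \<Longrightarrow>
      chain_defined D T Ti C DA A is' x \<and> bounded_clinear (opchain Ti C A is')" for is' x
    using hyp by (simp add: hyp_ii_def)
  show "bounded_clinear (opchain Ti C A is)"
  proof (cases "is")
    case Nil
    then show ?thesis using hyp_iiD(3)[OF hyp] by (simp add: opchain_Nil_eq)
  qed (use chain "is" in blast)
  show "opchain Ti C A is x \<in> D"
  proof (cases "is")
    case Nil
    then show ?thesis using Tinv_in_Tdom[OF hyp_iiD(1,2)[OF hyp]] by simp
  next
    case (Cons j js)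
    then show ?thesis using chain[of "is" x] "is" Tinv_in_Tdom[OF hyp_iiD(1)[OF hyp]] by simp
  qed
  show "A i (opchain Ti C A is x) \<in> T ` D" if "i \<in> {1..n}"
    using chain[of "i # is" x] "is" that by simp
qed

text \<open>Under hypothesis (ii), every \<open>S(v)\<close> is a linear combination of the operators
  \<open>T\<^sup>-\<^sup>1A\<^sub>i\<^sub>1 \<cdots> T\<^sup>-\<^sup>1A\<^sub>i\<^sub>l T\<^sup>-\<^sup>1C\<close>, and all properties needed below are
  preserved under linear combinations and under \<open>f \<mapsto> T\<^sup>-\<^sup>1A\<^sub>i f\<close>.\<close>

inductive_set chain_span :: "('a \<Rightarrow> 'a) set" where
  opchain: "set is \<subseteq> {1..n} \<Longrightarrow> opchain Ti C A is \<in> chain_span"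
| add: "f \<in> chain_span \<Longrightarrow> g \<in> chain_span \<Longrightarrow> (\<lambda>x. f x + g x) \<in> chain_span"
| scaleC: "f \<in> chain_span \<Longrightarrow> (\<lambda>x. c *\<^sub>C f x) \<in> chain_span"
| zero: "(\<lambda>x. 0) \<in> chain_span"

lemma chain_span_sum: "(\<And>i. i \<in> I \<Longrightarrow> g i \<in> chain_span) \<Longrightarrow> (\<lambda>x. \<Sum>i\<in>I. g i x) \<in> chain_span"
  by (induction I rule: infinite_finite_induct) (simp_all add: chain_span.zero chain_span.add)

lemma Tinv_C_in_chain_span: "(\<lambda>x. Ti (C x)) \<in> chain_span"
  using chain_span.opchain[of "[]"] by (simp add: opchain_Nil_eq)

context
  assumes hyp: "hyp_ii C DB B DA A a n"
begin

lemma chain_span_values: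
  assumes "f \<in> chain_span"
  shows "bounded_clinear f \<and> (\<forall>x. f x \<in> D) \<and> (\<forall>i\<in>{1..n}. \<forall>x. A i (f x) \<in> T ` D)"
  using assms
proof (induction rule: chain_span.induct)
  case (opchain "is")
  then show ?case using hyp_ii_opchain[OF hyp opchain] by blast
next
  case (add f g)
  have "A i (f x + g x) = A i (f x) + A i (g x)" if "i \<in> {1..n}" for i x
    using add that by (simp add: clinear_op_add[OF clinear_op_A] Tdom_DA)
  then show ?case
    using add csubspace_add[OF csubspace_Tdom] csubspace_add[OF csubspace_range_T]
    by (simp add: bounded_clinear_add)
next
  case (scaleC f c)
  have "A i (c *\<^sub>C f x) = c *\<^sub>C A i (f x)" if "i \<in> {1..n}" for i x
    using scaleC that by (simp add: clinear_op_scaleC[OF clinear_op_A] Tdom_DA)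
  then show ?case
    using scaleC csubspace_scaleC[OF csubspace_Tdom] csubspace_scaleC[OF csubspace_range_T]
    by (simp add: bounded_clinear_scaleC)
next
  case zero
  show ?case
    by (simp add: bounded_clinear_zero csubspace_0[OF csubspace_Tdom] csubspace_0[OF csubspace_range_T]
        clinear_op_0[OF clinear_op_A])
qed

lemma chain_span_bounded: "f \<in> chain_span \<Longrightarrow> bounded_clinear f"
  and chain_span_in_Tdom: "f \<in> chain_span \<Longrightarrow> f x \<in> D"
  and chain_span_A_range: "f \<in> chain_span \<Longrightarrow> i \<in> {1..n} \<Longrightarrow> A i (f x) \<in> T ` D"
  using chain_span_values by blast+

lemma chain_span_Tinv_A:
  assumes "f \<in> chain_span" and i: "i \<in> {1..n}"
  shows "(\<lambda>x. Ti (A i (f x))) \<in> chain_span"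
  using assms(1)
proof (induction rule: chain_span.induct)
  case (opchain "is")
  then show ?case using chain_span.opchain[of "i # is"] i by (simp add: opchain_Cons_eq)
next
  case (add f g)
  note Ti = clinear_op_Tinv[OF hyp_iiD(1)[OF hyp]]
  have "Ti (A i (f x + g x)) = Ti (A i (f x)) + Ti (A i (g x))" for x
    using add i chain_span_in_Tdom chain_span_A_range
    by (simp add: clinear_op_add[OF clinear_op_A] Tdom_DA clinear_op_add[OF Ti])
  then show ?case using chain_span.add[OF add.IH] by simp
next
  case (scaleC f c)
  note Ti = clinear_op_Tinv[OF hyp_iiD(1)[OF hyp]]
  have "Ti (A i (c *\<^sub>C f x)) = c *\<^sub>C Ti (A i (f x))" for x
    using scaleC i chain_span_in_Tdom chain_span_A_range
    by (simp add: clinear_op_scaleC[OF clinear_op_A] Tdom_DA clinear_op_scaleC[OF Ti])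
  then show ?case using chain_span.scaleC[OF scaleC.IH] by simp
next
  case zero
  show ?case
    using chain_span.zero i
    by (simp add: clinear_op_0[OF clinear_op_A] clinear_op_0[OF clinear_op_Tinv[OF hyp_iiD(1)[OF hyp]]])
qed

lemma chain_span_A_bounded:
  assumes f: "f \<in> chain_span" and i: "i \<in> {1..n}"
  shows "bounded_clinear (\<lambda>x. A i (f x))"
  using A_closed i
  by (intro closed_op_compose_bounded_clinear[OF _ chain_span_bounded[OF f] Tdom_DA[OF chain_span_in_Tdom[OF f] i]])
    blast

context
  fixes S :: "nat \<Rightarrow> 'a \<Rightarrow> 'a"
  assumes SR: "S_rec k C DB B DA A a n S"
begin

lemma S_rec_0: "S 0 = (\<lambda>x. k 0 *\<^sub>C Ti (C x))"
  and S_rec_step: "v \<ge> 1 \<Longrightarrow> S v = (\<lambda>x. Ti (rhs S v x))"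
  using SR by (simp_all add: S_rec_def)

lemma Tinv_rhs_eq:
  assumes "\<And>i. i \<in> {1..n} \<Longrightarrow> A i (tail_sum (a i) S v x) \<in> T ` D"
  shows "Ti (rhs S v x) = k v *\<^sub>C Ti (C x) + (\<Sum>i=1..n. Ti (A i (tail_sum (a i) S v x)))"
proof -
  note Ti = clinear_op_Tinv[OF hyp_iiD(1)[OF hyp]] and R = csubspace_range_T
  have "(\<Sum>i=1..n. A i (tail_sum (a i) S v x)) \<in> T ` D"
    using assms by (intro csubspace_sum[OF R])
  moreover have "Ti (\<Sum>i=1..n. A i (tail_sum (a i) S v x)) = (\<Sum>i=1..n. Ti (A i (tail_sum (a i) S v x)))"
    by (rule clinear_op_sum[OF Ti]) (rule assms)
  ultimately show ?thesis
    using hyp_iiD(2)[OF hyp]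
    by (simp add: rec_rhs_def clinear_op_add[OF Ti] clinear_op_scaleC[OF Ti] csubspace_scaleC[OF R])
qed

lemma recursive_family_in_chain_span: "S v \<in> chain_span"
proof (induction v rule: less_induct)
  case (less v)
  have tail: "(\<lambda>x. tail_sum (a i) S v x) \<in> chain_span" for i
    unfolding tail_sum_def using less by (intro chain_span_sum chain_span.scaleC) auto
  show ?case
  proof (cases "v = 0")
    case True
    then show ?thesis using chain_span.scaleC[OF Tinv_C_in_chain_span] by (simp add: S_rec_0)
  next
    case False
    have "(\<lambda>x. k v *\<^sub>C Ti (C x) + (\<Sum>i=1..n. Ti (A i (tail_sum (a i) S v x)))) \<in> chain_span"
      using tail by (intro chain_span.add chain_span.scaleC chain_span_sum chain_span_Tinv_A Tinv_C_in_chain_span)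
    moreover have "Ti (rhs S v x) = k v *\<^sub>C Ti (C x) + (\<Sum>i=1..n. Ti (A i (tail_sum (a i) S v x)))" for x
      by (rule Tinv_rhs_eq) (rule chain_span_A_range[OF tail])
    ultimately show ?thesis
      using False by (simp add: S_rec_step)
  qed
qed

lemma tail_sum_in_chain_span: "(\<lambda>x. tail_sum b S v x) \<in> chain_span"
  unfolding tail_sum_def by (intro chain_span_sum chain_span.scaleC recursive_family_in_chain_span)

lemma recursive_family_in_Tdom: "S v x \<in> D"
  by (rule chain_span_in_Tdom[OF recursive_family_in_chain_span])

lemma tail_sum_in_Tdom: "tail_sum b S v x \<in> D"
  by (rule chain_span_in_Tdom[OF tail_sum_in_chain_span])

lemma rhs_in_range_T: "rhs S v x \<in> T ` D"
  unfolding rec_rhs_def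
  by (intro csubspace_add[OF csubspace_range_T] csubspace_scaleC[OF csubspace_range_T] hyp_iiD(2)[OF hyp]
      csubspace_sum[OF csubspace_range_T] chain_span_A_range[OF tail_sum_in_chain_span])

lemma recursive_family_T: "T (S v x) = rhs S v x"
  using T_Tinv[OF hyp_iiD(1)[OF hyp] rhs_in_range_T] hyp_iiD[OF hyp]
  by (cases "v = 0") (simp_all add: S_rec_0 S_rec_step rec_rhs_0 clinear_op_scaleC[OF clinear_op_T]
      Tinv_in_Tdom T_Tinv)

lemma recursive_family_is_existence_family: "exist_fam S"
  unfolding disc_exist_fam_def
proof (intro conjI allI ballI)
  fix v
  show "bounded_clinear (S v)" by (rule chain_span_bounded[OF recursive_family_in_chain_span])
next
  fix v x
  show "S v x \<in> DB" by (rule Tdom_DB[OF recursive_family_in_Tdom])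
next
  fix v i x assume i: "i \<in> {1..n}"
  have conv: "(\<lambda>x. conv0 (a i) S v x) \<in> chain_span"
    unfolding conv0_def by (intro chain_span_sum chain_span.scaleC recursive_family_in_chain_span)
  show "conv0 (a i) S v x \<in> DA i" by (rule Tdom_DA[OF chain_span_in_Tdom[OF conv] i])
  show "bounded_clinear (\<lambda>x. A i (conv0 (a i) S v x))" by (rule chain_span_A_bounded[OF conv i])
next
  fix v x
  have A_conv0: "A i (conv0 (a i) S v x) = a i 0 *\<^sub>C A i (S v x) + A i (tail_sum (a i) S v x)"
    if "i \<in> {1..n}" for i
    using that recursive_family_in_Tdom tail_sum_in_Tdom
    by (simp add: conv0_eq_tail_sum clinear_op_add[OF clinear_op_A] clinear_op_scaleC[OF clinear_op_A]
        csubspace_scaleC[OF csubspace_DA] Tdom_DA)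
  have sum_A_conv0: "(\<Sum>i=1..n. A i (conv0 (a i) S v x))
      = (\<Sum>i=1..n. a i 0 *\<^sub>C A i (S v x)) + (\<Sum>i=1..n. A i (tail_sum (a i) S v x))"
    by (simp add: A_conv0 sum.distrib)
  have "B (S v x) = T (S v x) + (\<Sum>i=1..n. a i 0 *\<^sub>C A i (S v x))"
    by (simp add: Top_def)
  also have "\<dots> = k v *\<^sub>C C x + (\<Sum>i=1..n. A i (tail_sum (a i) S v x)) + (\<Sum>i=1..n. a i 0 *\<^sub>C A i (S v x))"
    by (simp only: recursive_family_T rec_rhs_def)
  also have "\<dots> = k v *\<^sub>C C x + (\<Sum>i=1..n. A i (conv0 (a i) S v x))"
    by (simp only: sum_A_conv0 ac_simps)
  finally show "B (S v x) = k v *\<^sub>C C x + (\<Sum>i=1..n. A i (conv0 (a i) S v x))" .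
qed

lemma existence_family_unique: "exist_fam S' \<Longrightarrow> S' = S"
proof -
  assume F': "exist_fam S'"
  have "S' v = S v" for v
  proof (induction v rule: less_induct)
    case (less v)
    then have "rhs S' v x = rhs S v x" for x
      by (simp add: rec_rhs_def tail_sum_def)
    then have "T (S' v x) = T (S v x)" for x
      using existence_family_T[OF F'] recursive_family_T by simp
    then show ?case
      using inj_onD[OF hyp_iiD(1)[OF hyp] _ existence_family_in_Tdom[OF F'] recursive_family_in_Tdom] by blast
  qed
  then show ?thesis by blast
qed

lemma recursive_family_A_bounded: "i \<in> {1..n} \<Longrightarrow> bounded_clinear (\<lambda>x. A i (S v x))"
  by (rule chain_span_A_bounded[OF recursive_family_in_chain_span])

end

end

section \<open>Commutation under (U1)--(U3)\<close>

lemma A_T_commute: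
  assumes U2: "U2 DB B DA A n I" and U3: "U3 DA A n I"
    and i: "i \<in> {1..n} - I" and y: "y \<in> D"
  shows "A i y \<in> D" "T (A i y) = A i (T y)"
proof -
  have i1: "i \<in> {1..n}" using i by blast
  note Ai = clinear_op_A[OF i1] and DAi = csubspace_DA[OF i1]
  have B_comm: "B y \<in> DA i" "A i y \<in> DB" "A i (B y) = B (A i y)"
    using U2 i y unfolding U2_def by (auto simp: Tdom_iff)
  have A_comm: "A j y \<in> DA i" "A i y \<in> DA j" "A i (A j y) = A j (A i y)" if j: "j \<in> {1..n}" for j
  proof -
    have "y \<in> DA i \<inter> DA j" using y i1 j by (simp add: Tdom_DA)
    then show "A j y \<in> DA i" "A i y \<in> DA j" "A i (A j y) = A j (A i y)"
      using U3 i j unfolding U3_def by blast+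
  qed
  show "A i y \<in> D" using B_comm A_comm by (simp add: Tdom_iff)
  have sum_DA: "(\<Sum>j=1..n. a j 0 *\<^sub>C A j y) \<in> DA i"
    using A_comm by (intro csubspace_sum[OF DAi] csubspace_scaleC[OF DAi]) auto
  have "A i (\<Sum>j=1..n. a j 0 *\<^sub>C A j y) = (\<Sum>j=1..n. A i (a j 0 *\<^sub>C A j y))"
    using A_comm by (intro clinear_op_sum[OF Ai] csubspace_scaleC[OF DAi]) auto
  also have "\<dots> = (\<Sum>j=1..n. a j 0 *\<^sub>C A j (A i y))"
    using A_comm by (intro sum.cong) (simp_all add: clinear_op_scaleC[OF Ai])
  finally show "T (A i y) = A i (T y)"
    using B_comm sum_DA by (simp add: Top_def clinear_op_diff[OF Ai])
qed

lemma Tinv_A_commute: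
  assumes T_inj: "inj_on T D" and U2: "U2 DB B DA A n I" and U3: "U3 DA A n I"
    and i: "i \<in> {1..n} - I" and z: "z \<in> T ` D"
  shows "A i z \<in> T ` D" "Ti (A i z) = A i (Ti z)"
proof -
  have y: "Ti z \<in> D" "T (Ti z) = z" using Tinv_in_Tdom[OF T_inj z] T_Tinv[OF T_inj z] .
  have "A i z = T (A i (Ti z))" using A_T_commute[OF U2 U3 i y(1)] y(2) by simp
  then show "A i z \<in> T ` D" "Ti (A i z) = A i (Ti z)"
    using A_T_commute(1)[OF U2 U3 i y(1)] Tinv_T[OF T_inj] by auto
qed

context
  assumes hyp: "hyp_ii C DB B DA A a n"
  fixes S :: "nat \<Rightarrow> 'a \<Rightarrow> 'a"
  assumes SR: "S_rec k C DB B DA A a n S"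
begin

lemma recursive_family_eq: "S v x = Ti (rhs S v x)"
  using recursive_family_T[OF hyp SR] Tinv_T[OF hyp_iiD(1)[OF hyp] recursive_family_in_Tdom[OF hyp SR]]
  by simp

lemma rhs_A_commute:
  assumes U1: "U1 C DB B DA A n I" and U3: "U3 DA A n I"
    and i: "i \<in> {1..n} - I" and x: "x \<in> DA i"
    and IH: "\<And>j x. j < v \<Longrightarrow> x \<in> DA i \<Longrightarrow> S j (A i x) = A i (S j x)"
  shows "rhs S v x \<in> DA i" "rhs S v (A i x) = A i (rhs S v x)"
proof -
  have i1: "i \<in> {1..n}" using i by blast
  note Ai = clinear_op_A[OF i1] and DAi = csubspace_DA[OF i1]
  have C_comm: "C x \<in> DA i" "A i (C x) = C (A i x)"
    using U1 i x unfolding U1_def op_commutes_bdd_def by blast+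
  have S_DA: "S j y \<in> DA i" for j y
    using Tdom_DA[OF recursive_family_in_Tdom[OF hyp SR] i1] .
  have tail_comm: "tail_sum (a j) S v (A i x) = A i (tail_sum (a j) S v x)" for j
    unfolding tail_sum_def using IH x S_DA
    by (simp add: clinear_op_sum[OF Ai] clinear_op_scaleC[OF Ai] csubspace_scaleC[OF DAi])
  have A_comm: "A j (tail_sum (a j) S v x) \<in> DA i"
    "A i (A j (tail_sum (a j) S v x)) = A j (A i (tail_sum (a j) S v x))" if j: "j \<in> {1..n}" for j
    using U3 i j Tdom_DA[OF tail_sum_in_Tdom[OF hyp SR]] i1 unfolding U3_def by blast+
  have sum_DA: "(\<Sum>j=1..n. A j (tail_sum (a j) S v x)) \<in> DA i"
    using A_comm by (intro csubspace_sum[OF DAi]) auto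
  show "rhs S v x \<in> DA i"
    unfolding rec_rhs_def by (intro csubspace_add[OF DAi] csubspace_scaleC[OF DAi] C_comm sum_DA)
  have "A i (\<Sum>j=1..n. A j (tail_sum (a j) S v x)) = (\<Sum>j=1..n. A i (A j (tail_sum (a j) S v x)))"
    using A_comm by (intro clinear_op_sum[OF Ai]) auto
  then show "rhs S v (A i x) = A i (rhs S v x)"
    using C_comm sum_DA A_comm csubspace_scaleC[OF DAi C_comm(1)]
    by (simp add: rec_rhs_def tail_comm clinear_op_add[OF Ai] clinear_op_scaleC[OF Ai])
qed

lemma recursive_family_commutes:
  assumes U1: "U1 C DB B DA A n I" and U2: "U2 DB B DA A n I" and U3: "U3 DA A n I"
  shows "disc_exist_fam_I k C DB B DA A a n I S"
proof -
  have "S v (A i x) = A i (S v x)" if i: "i \<in> {1..n} - I" and x: "x \<in> DA i" for v i x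
    using x
  proof (induction v arbitrary: x rule: less_induct)
    case (less v)
    note rhs = rhs_A_commute[OF U1 U3 i less.prems less.IH]
    have "S v (A i x) = Ti (A i (rhs S v x))" by (simp add: recursive_family_eq[of v "A i x"] rhs)
    also have "\<dots> = A i (S v x)"
      by (simp add: Tinv_A_commute[OF hyp_iiD(1)[OF hyp] U2 U3 i rhs_in_range_T[OF hyp SR]]
          recursive_family_eq[of v x])
    finally show ?case .
  qed
  then show ?thesis
    unfolding disc_exist_fam_I_def
    using recursive_family_is_existence_family[OF hyp SR] recursive_family_in_Tdom[OF hyp SR] Tdom_DA
    by auto
qed

end

end

section \<open>Polynomials of a linear operator\<close>

lemma funpow_funpow_apply: "(f^^m) ((f^^n) x) = (f^^(m + n)) x"
  by (simp add: funpow_add)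

locale poly_calculus =
  fixes D0 :: "'a::complex_banach set" and A0 :: "'a \<Rightarrow> 'a"
  assumes clinear_op_A0: "clinear_op D0 A0"
begin

definition pow_dom :: "nat \<Rightarrow> 'a set" where
  "pow_dom j = {x. \<forall>l<j. (A0^^l) x \<in> D0}"

text \<open>Truncating at a fixed \<open>N \<ge> degree Q\<close> instead of at \<open>degree Q\<close> (as \<^const>\<open>poly_op_fun\<close> does)
  makes \<open>poly_op N Q\<close> linear in \<open>Q\<close>.\<close>

definition poly_op :: "nat \<Rightarrow> complex poly \<Rightarrow> 'a \<Rightarrow> 'a" where
  "poly_op N Q x = (\<Sum>r\<le>N. coeff Q r *\<^sub>C (A0^^r) x)"

lemma pow_dom_mono: "j \<le> j' \<Longrightarrow> x \<in> pow_dom j' \<Longrightarrow> x \<in> pow_dom j"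
  by (auto simp: pow_dom_def)

lemma pow_dom_0[simp]: "x \<in> pow_dom 0"
  by (simp add: pow_dom_def)

lemma pow_dom_Suc: "x \<in> pow_dom (Suc j) \<longleftrightarrow> x \<in> pow_dom j \<and> (A0^^j) x \<in> D0"
  by (auto simp: pow_dom_def less_Suc_eq)

lemma pow_dom_add: "x \<in> pow_dom (j + l) \<longleftrightarrow> x \<in> pow_dom l \<and> (A0^^l) x \<in> pow_dom j"
proof
  assume "x \<in> pow_dom (j + l)"
  then show "x \<in> pow_dom l \<and> (A0^^l) x \<in> pow_dom j"
    by (auto simp: pow_dom_def funpow_funpow_apply)
next
  assume x: "x \<in> pow_dom l \<and> (A0^^l) x \<in> pow_dom j"
  have "(A0^^r) x \<in> D0" if "r < j + l" for r
  proof (cases "r < l")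
    case False
    then have "(A0^^(r - l)) ((A0^^l) x) \<in> D0" using x that by (simp add: pow_dom_def)
    then show ?thesis using False by (simp add: funpow_funpow_apply)
  qed (use x in \<open>simp add: pow_dom_def\<close>)
  then show "x \<in> pow_dom (j + l)" by (simp add: pow_dom_def)
qed

lemma pow_in_pow_dom: "x \<in> pow_dom (j + r) \<Longrightarrow> (A0^^r) x \<in> pow_dom j"
  by (simp add: pow_dom_add)

lemma clinear_op_pow: "clinear_op (pow_dom l) (A0^^l)"
proof (induction l)
  case 0
  show ?case by (simp add: clinear_op_def)
next
  case (Suc l)
  note IH = Suc.IH[unfolded clinear_op_def] and A0 = clinear_op_A0[unfolded clinear_op_def]
  show ?case
    unfolding clinear_op_def pow_dom_Suc
  proof (intro conjI ballI allI)
    show "(0::'a) \<in> pow_dom l" "(A0^^l) 0 \<in> D0"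
      using IH A0 clinear_op_0[OF Suc.IH] by simp_all
  next
    fix x y assume x: "x \<in> pow_dom (Suc l)" and y: "y \<in> pow_dom (Suc l)"
    then show "x + y \<in> pow_dom l" "(A0^^l) (x + y) \<in> D0" "(A0^^Suc l) (x + y) = (A0^^Suc l) x + (A0^^Suc l) y"
      using IH A0 by (simp_all add: pow_dom_Suc)
  next
    fix c x assume x: "x \<in> pow_dom (Suc l)"
    then show "c *\<^sub>C x \<in> pow_dom l" "(A0^^l) (c *\<^sub>C x) \<in> D0" "(A0^^Suc l) (c *\<^sub>C x) = c *\<^sub>C (A0^^Suc l) x"
      using IH A0 by (simp_all add: pow_dom_Suc)
  qed
qed

lemma csubspace_pow_dom: "csubspace (pow_dom j)"
  by (rule clinear_op_csubspace[OF clinear_op_pow])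

lemma poly_op_in_pow_dom:
  assumes x: "x \<in> pow_dom (j + N)"
  shows "poly_op N Q x \<in> pow_dom j"
proof -
  have "(A0^^r) x \<in> pow_dom j" if "r \<le> N" for r
    using pow_in_pow_dom[OF pow_dom_mono[OF _ x]] that by simp
  then show ?thesis
    unfolding poly_op_def by (intro csubspace_sum[OF csubspace_pow_dom] csubspace_scaleC[OF csubspace_pow_dom]) auto
qed

lemma pow_poly_op:
  assumes x: "x \<in> pow_dom (l + N)"
  shows "(A0^^l) (poly_op N Q x) = poly_op N Q ((A0^^l) x)"
proof -
  have x_r: "(A0^^r) x \<in> pow_dom l" if "r \<le> N" for r
    using pow_in_pow_dom[OF pow_dom_mono[OF _ x]] that by simp
  have "(A0^^l) (poly_op N Q x) = (\<Sum>r\<le>N. (A0^^l) (coeff Q r *\<^sub>C (A0^^r) x))"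
    unfolding poly_op_def using x_r
    by (intro clinear_op_sum[OF clinear_op_pow] csubspace_scaleC[OF csubspace_pow_dom]) auto
  also have "\<dots> = (\<Sum>r\<le>N. coeff Q r *\<^sub>C (A0^^r) ((A0^^l) x))"
    using x_r by (intro sum.cong) (simp_all add: clinear_op_scaleC[OF clinear_op_pow] funpow_swap1
        funpow_funpow_apply add.commute)
  finally show ?thesis by (simp add: poly_op_def)
qed

lemma poly_op_diff: "poly_op N (P - Q) x = poly_op N P x - poly_op N Q x"
  by (simp add: poly_op_def scaleC_diff_left sum_subtractf)

lemma poly_op_smult: "poly_op N (smult c P) x = c *\<^sub>C poly_op N P x"
  by (simp add: poly_op_def scaleC_sum_right scaleC_scaleC)

lemma poly_op_sum: "poly_op N (\<Sum>i\<in>I. Q i) x = (\<Sum>i\<in>I. poly_op N (Q i) x)"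
  by (simp add: poly_op_def coeff_sum scaleC_sum_left sum.swap[of _ I])

lemma poly_op_eq_poly_op_fun: "degree Q \<le> N \<Longrightarrow> poly_op N Q x = poly_op_fun A0 Q x"
  unfolding poly_op_def poly_op_fun_def
  by (rule sum.mono_neutral_right) (auto simp: coeff_eq_0)

lemma poly_op_degree: "degree Q \<le> N \<Longrightarrow> poly_op N Q x = poly_op (degree Q) Q x"
  using poly_op_eq_poly_op_fun[of Q N x] poly_op_eq_poly_op_fun[of Q "degree Q" x] by simp

text \<open>Induction on \<open>j\<close>: the top term \<open>coeff Q d *\<^sub>C A0\<^sup>d\<^sup>+\<^sup>j x\<close> of \<open>A0\<^sup>j (Q(A0) x)\<close>
  can be solved for, since its coefficient is nonzero.\<close>

lemma pow_dom_of_poly_op: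
  assumes Q: "Q \<noteq> 0" and x: "x \<in> pow_dom (degree Q)"
    and Qx: "poly_op (degree Q) Q x \<in> pow_dom j"
  shows "x \<in> pow_dom (j + degree Q)"
  using Qx
proof (induction j)
  case (Suc j)
  define d where "d = degree Q"
  note D0 = clinear_op_csubspace[OF clinear_op_A0]
  have xj: "x \<in> pow_dom (j + d)"
    using Suc pow_dom_mono[of j "Suc j"] by (simp add: d_def)
  have "(A0^^j) (poly_op d Q x) = poly_op d Q ((A0^^j) x)"
    using xj by (simp add: pow_poly_op add.commute)
  also have "\<dots> = coeff Q d *\<^sub>C (A0^^(d + j)) x + (\<Sum>r<d. coeff Q r *\<^sub>C (A0^^(r + j)) x)"
    by (simp add: poly_op_def funpow_funpow_apply lessThan_Suc_atMost[symmetric] add.commute)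
  finally have top: "coeff Q d *\<^sub>C (A0^^(d + j)) x
      = (A0^^j) (poly_op d Q x) - (\<Sum>r<d. coeff Q r *\<^sub>C (A0^^(r + j)) x)"
    by (simp add: algebra_simps)
  have "(A0^^j) (poly_op d Q x) \<in> D0"
    using Suc.prems by (simp add: pow_dom_def d_def)
  moreover have "(\<Sum>r<d. coeff Q r *\<^sub>C (A0^^(r + j)) x) \<in> D0"
    using xj by (intro csubspace_sum[OF D0] csubspace_scaleC[OF D0]) (simp add: pow_dom_def)
  ultimately have "coeff Q d *\<^sub>C (A0^^(d + j)) x \<in> D0"
    unfolding top by (rule csubspace_diff[OF D0])
  then have "inverse (coeff Q d) *\<^sub>C (coeff Q d *\<^sub>C (A0^^(d + j)) x) \<in> D0"
    by (rule csubspace_scaleC[OF D0])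
  then have "(A0^^(d + j)) x \<in> D0" using Q by (simp add: d_def)
  then show ?case using xj by (simp add: pow_dom_Suc d_def add.commute)
qed (use x in simp)

lemma poly_op_commute:
  assumes x: "x \<in> pow_dom (N + M)"
  shows "poly_op N P (poly_op M Q x) = poly_op M Q (poly_op N P x)"
proof -
  have expand: "poly_op N P (poly_op M Q x)
      = (\<Sum>r\<le>N. \<Sum>s\<le>M. (coeff P r * coeff Q s) *\<^sub>C (A0^^(r + s)) x)"
    if x: "x \<in> pow_dom (N + M)" for N M P Q
  proof -
    have "poly_op N P (poly_op M Q x) = (\<Sum>r\<le>N. coeff P r *\<^sub>C poly_op M Q ((A0^^r) x))"
      unfolding poly_op_def[of N]
      using pow_poly_op[OF pow_dom_mono[OF _ x]] by (intro sum.cong) auto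
    then show ?thesis
      by (simp add: poly_op_def scaleC_sum_right scaleC_scaleC funpow_funpow_apply add.commute)
  qed
  show ?thesis
    unfolding expand[OF x] expand[OF x[unfolded add.commute[of N]]]
    by (subst sum.swap) (simp add: mult.commute add.commute)
qed

end

locale multiterm_poly_setting = multiterm_setting n DB B DA A C k a + poly_calculus D0 A0
  for n and DB :: "'a::complex_banach set" and B DA A C k a and D0 :: "'a set" and A0 +
  fixes PB :: "complex poly" and P :: "nat \<Rightarrow> complex poly"
  assumes C_commute_A0: "op_commutes_bdd C D0 A0"
    and B_poly: "is_poly_of DB B D0 A0 PB"
    and A_poly: "\<forall>i\<in>{1..n}. is_poly_of (DA i) (A i) D0 A0 (P i)"
begin

definition dmax :: nat where
  "dmax = Max (insert (degree PB) ((\<lambda>i. degree (P i)) ` {1..n}))"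

definition PT :: "complex poly" where
  "PT = PB - (\<Sum>i=1..n. smult (a i 0) (P i))"

lemma poly_op_dom_eq: "poly_op_dom D0 A0 Q = pow_dom (degree Q)"
  by (simp add: poly_op_dom_def pow_dom_def)

lemma DB_eq: "DB = pow_dom (degree PB)"
  using B_poly by (simp add: is_poly_of_def poly_op_dom_eq)

lemma DA_eq: "i \<in> {1..n} \<Longrightarrow> DA i = pow_dom (degree (P i))"
  using A_poly by (simp add: is_poly_of_def poly_op_dom_eq)

lemma degree_PB_le: "degree PB \<le> dmax"
  unfolding dmax_def by (intro Max_ge) auto

lemma degree_P_le: "i \<in> {1..n} \<Longrightarrow> degree (P i) \<le> dmax"
  unfolding dmax_def by (intro Max_ge) auto

lemma degree_PT_le: "degree PT \<le> dmax"
  unfolding PT_def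
  by (intro degree_diff_le degree_PB_le degree_sum_le order.trans[OF degree_smult_le] degree_P_le) auto

lemma B_eq_poly_op: "x \<in> DB \<Longrightarrow> B x = poly_op dmax PB x"
  using B_poly degree_PB_le by (simp add: is_poly_of_def poly_op_eq_poly_op_fun)

lemma A_eq_poly_op: "i \<in> {1..n} \<Longrightarrow> x \<in> DA i \<Longrightarrow> A i x = poly_op dmax (P i) x"
  using A_poly degree_P_le by (simp add: is_poly_of_def poly_op_eq_poly_op_fun)

lemma Tdom_eq: "D = pow_dom dmax"
proof (intro set_eqI iffI)
  fix x assume x: "x \<in> D"
  have "x \<in> pow_dom (degree PB)" "\<And>i. i \<in> {1..n} \<Longrightarrow> x \<in> pow_dom (degree (P i))"
    using Tdom_DB[OF x] Tdom_DA[OF x] DB_eq DA_eq by auto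
  moreover have "dmax \<in> insert (degree PB) ((\<lambda>i. degree (P i)) ` {1..n})"
    unfolding dmax_def by (intro Max_in) auto
  ultimately show "x \<in> pow_dom dmax" by auto
next
  fix x assume x: "x \<in> pow_dom dmax"
  have "x \<in> DB" using pow_dom_mono[OF degree_PB_le x] DB_eq by simp
  moreover have "x \<in> DA i" if "i \<in> {1..n}" for i
    using pow_dom_mono[OF degree_P_le[OF that] x] DA_eq[OF that] by simp
  ultimately show "x \<in> D" by (simp add: Tdom_iff)
qed

lemma T_eq_poly_op:
  assumes u: "u \<in> D"
  shows "T u = poly_op (degree PT) PT u"
proof -
  have "T u = poly_op dmax PB u - (\<Sum>i=1..n. a i 0 *\<^sub>C poly_op dmax (P i) u)"
    using u by (simp add: Top_def Tdom_DB Tdom_DA B_eq_poly_op A_eq_poly_op)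
  also have "\<dots> = poly_op dmax PT u"
    by (simp add: PT_def poly_op_diff poly_op_sum poly_op_smult)
  finally show ?thesis by (simp add: poly_op_degree[OF degree_PT_le])
qed

lemma range_T_pow_dom: "z \<in> T ` D \<Longrightarrow> z \<in> pow_dom (dmax - degree PT)"
  using poly_op_in_pow_dom[of _ "dmax - degree PT" "degree PT"] degree_PT_le
  by (auto simp: Tdom_eq T_eq_poly_op)

lemma C_pow_commute: "x \<in> pow_dom l \<Longrightarrow> C x \<in> pow_dom l \<and> (A0^^l) (C x) = C ((A0^^l) x)"
proof (induction l)
  case (Suc l)
  then show ?case
    using C_commute_A0 unfolding op_commutes_bdd_def by (simp add: pow_dom_Suc)
qed simp

definition regularizing :: "('a \<Rightarrow> 'a) \<Rightarrow> bool" where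
  "regularizing R \<longleftrightarrow> (\<forall>j x. x \<in> pow_dom j \<longrightarrow> R x \<in> pow_dom (j + dmax) \<and> (A0^^j) (R x) = R ((A0^^j) x))"

lemma regularizing_sum:
  assumes "\<And>q. q \<in> Q \<Longrightarrow> regularizing (R q)"
  shows "regularizing (\<lambda>x. \<Sum>q\<in>Q. c q *\<^sub>C R q x)"
  unfolding regularizing_def
proof (intro allI impI conjI)
  fix j x assume x: "x \<in> pow_dom j"
  have R: "R q x \<in> pow_dom (j + dmax)" "(A0^^j) (R q x) = R q ((A0^^j) x)" if "q \<in> Q" for q
    using assms[OF that] x unfolding regularizing_def by blast+
  show "(\<Sum>q\<in>Q. c q *\<^sub>C R q x) \<in> pow_dom (j + dmax)"
    using R by (intro csubspace_sum[OF csubspace_pow_dom] csubspace_scaleC[OF csubspace_pow_dom]) auto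
  have "R q x \<in> pow_dom j" if "q \<in> Q" for q
    using pow_dom_mono[OF _ R(1)[OF that]] by simp
  then show "(A0^^j) (\<Sum>q\<in>Q. c q *\<^sub>C R q x) = (\<Sum>q\<in>Q. c q *\<^sub>C R q ((A0^^j) x))"
    using R by (simp add: clinear_op_sum[OF clinear_op_pow] clinear_op_scaleC[OF clinear_op_pow]
        csubspace_scaleC[OF csubspace_pow_dom])
qed

context
  assumes hyp: "hyp_ii C DB B DA A a n"
begin

text \<open>If \<open>PT = 0\<close> then \<open>T = 0\<close>, and \<open>R(C) \<subseteq> R(T)\<close> with \<open>C\<close> injective forces \<open>X = {0}\<close>.\<close>

lemma PT_eq_0_imp_trivial: "PT = 0 \<Longrightarrow> (x::'a) = 0"
proof -
  assume PT: "PT = 0"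
  obtain u where "u \<in> D" "C x = T u" using hyp_iiD(2)[OF hyp, of x] by blast
  then have "C x = C 0" using PT by (simp add: T_eq_poly_op poly_op_def bounded_clinear_simps[OF C_bounded])
  then show ?thesis using C_inj by (meson injD)
qed

lemma A_regularizing:
  assumes f: "f \<in> chain_span" "regularizing f" and i: "i \<in> {1..n}" and x: "x \<in> pow_dom j"
  shows "A i (f x) \<in> pow_dom ((dmax - degree PT) + j)" "(A0^^j) (A i (f x)) = A i (f ((A0^^j) x))"
proof -
  have fx: "f y \<in> pow_dom (j' + dmax)" "(A0^^j') (f y) = f ((A0^^j') y)" if "y \<in> pow_dom j'" for y j'
    using f(2) that unfolding regularizing_def by blast+
  have A_f: "A i (f y) = poly_op dmax (P i) (f y)" for y
    by (rule A_eq_poly_op[OF i Tdom_DA[OF chain_span_in_Tdom[OF hyp f(1)] i]])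
  show comm: "(A0^^j) (A i (f x)) = A i (f ((A0^^j) x))"
    using fx[OF x] by (simp add: A_f pow_poly_op)
  have "(A0^^j) (A i (f x)) \<in> pow_dom (dmax - degree PT)"
    unfolding comm by (rule range_T_pow_dom[OF chain_span_A_range[OF hyp f(1) i]])
  moreover have "A i (f x) \<in> pow_dom j"
    using fx[OF x] by (simp add: A_f poly_op_in_pow_dom)
  ultimately show "A i (f x) \<in> pow_dom ((dmax - degree PT) + j)"
    by (simp add: pow_dom_add)
qed

context
  fixes S :: "nat \<Rightarrow> 'a \<Rightarrow> 'a"
  assumes SR: "S_rec k C DB B DA A a n S"
begin

lemma rhs_regularizing:
  assumes IH: "\<And>q. q < v \<Longrightarrow> regularizing (S q)" and x: "x \<in> pow_dom j"
  shows "rhs S v x \<in> pow_dom ((dmax - degree PT) + j)" "(A0^^j) (rhs S v x) = rhs S v ((A0^^j) x)"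
proof -
  note dom = csubspace_pow_dom[of "(dmax - degree PT) + j"]
  have tail: "tail_sum (a i) S v \<in> chain_span" "regularizing (tail_sum (a i) S v)" for i
    using tail_sum_in_chain_span[OF hyp SR] regularizing_sum[of "{..<v}" S] IH
    by (simp_all add: tail_sum_def[abs_def])
  note A_tail = A_regularizing[OF tail _ x]
  have C_dom: "C x \<in> pow_dom ((dmax - degree PT) + j)"
    using C_pow_commute[OF x] range_T_pow_dom[OF hyp_iiD(2)[OF hyp]] by (simp add: pow_dom_add)
  show "rhs S v x \<in> pow_dom ((dmax - degree PT) + j)"
    unfolding rec_rhs_def
    by (intro csubspace_add[OF dom] csubspace_scaleC[OF dom] csubspace_sum[OF dom] C_dom A_tail(1)) auto
  have A_tail_j: "A i (tail_sum (a i) S v x) \<in> pow_dom j" if "i \<in> {1..n}" for i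
    using pow_dom_mono[OF _ A_tail(1)[OF that]] by simp
  have C_j: "C x \<in> pow_dom j" using pow_dom_mono[OF _ C_dom] by simp
  have sum_j: "(\<Sum>i=1..n. A i (tail_sum (a i) S v x)) \<in> pow_dom j"
    using A_tail_j by (intro csubspace_sum[OF csubspace_pow_dom])
  have "(A0^^j) (\<Sum>i=1..n. A i (tail_sum (a i) S v x)) = (\<Sum>i=1..n. (A0^^j) (A i (tail_sum (a i) S v x)))"
    by (rule clinear_op_sum[OF clinear_op_pow]) (rule A_tail_j)
  then show "(A0^^j) (rhs S v x) = rhs S v ((A0^^j) x)"
    using C_j sum_j C_pow_commute[OF x] A_tail(2)
    by (simp add: rec_rhs_def clinear_op_add[OF clinear_op_pow] clinear_op_scaleC[OF clinear_op_pow]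
        csubspace_scaleC[OF csubspace_pow_dom])
qed

text \<open>\<open>T S(v) x = rhs\<close> gains \<open>dmax - degree PT\<close> degrees of regularity over \<open>x\<close>, and
  inverting \<open>PT(A0)\<close> gains \<open>degree PT\<close> more.\<close>

lemma recursive_family_regularizing:
  assumes PT: "PT \<noteq> 0"
  shows "regularizing (S v)"
proof (induction v rule: less_induct)
  case (less v)
  have rhs: "rhs S v x \<in> pow_dom ((dmax - degree PT) + j)" "(A0^^j) (rhs S v x) = rhs S v ((A0^^j) x)"
    if "x \<in> pow_dom j" for j x
    using rhs_regularizing[of v x j] less.IH that by blast+
  have S_D: "S v y \<in> D" for y by (rule recursive_family_in_Tdom[OF hyp SR])
  have T_S: "T (S v y) = poly_op (degree PT) PT (S v y)" for y by (rule T_eq_poly_op[OF S_D])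
  have S_dom: "S v x \<in> pow_dom (j + dmax)" if x: "x \<in> pow_dom j" for j x
  proof -
    have "S v x \<in> pow_dom (degree PT)" using S_D degree_PT_le pow_dom_mono by (simp add: Tdom_eq)
    moreover have "poly_op (degree PT) PT (S v x) \<in> pow_dom ((dmax - degree PT) + j)"
      using rhs(1)[OF x] recursive_family_T[OF hyp SR] T_S by simp
    ultimately have "S v x \<in> pow_dom ((dmax - degree PT) + j + degree PT)"
      by (rule pow_dom_of_poly_op[OF PT])
    then show ?thesis using degree_PT_le by (simp add: add.commute)
  qed
  have "(A0^^j) (S v x) = S v ((A0^^j) x)" if x: "x \<in> pow_dom j" for j x
  proof -
    have Sx: "S v x \<in> pow_dom (j + dmax)" by (rule S_dom[OF x])
    then have pow_D: "(A0^^j) (S v x) \<in> D"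
      by (simp add: Tdom_eq pow_in_pow_dom add.commute)
    have "T ((A0^^j) (S v x)) = (A0^^j) (poly_op (degree PT) PT (S v x))"
      using pow_poly_op[OF pow_dom_mono[OF _ Sx]] degree_PT_le T_eq_poly_op[OF pow_D] by simp
    also have "\<dots> = rhs S v ((A0^^j) x)"
      using rhs(2)[OF x] recursive_family_T[OF hyp SR] T_S by simp
    also have "\<dots> = T (S v ((A0^^j) x))"
      by (rule recursive_family_T[OF hyp SR, symmetric])
    finally show ?thesis
      using inj_onD[OF hyp_iiD(1)[OF hyp] _ pow_D S_D] by blast
  qed
  then show ?case using S_dom unfolding regularizing_def by blast
qed

lemma recursive_family_commutes_poly: "disc_exist_fam_I k C DB B DA A a n {} S"
proof -
  have "A i (S v x) = S v (A i x)" if i: "i \<in> {1..n}" and x: "x \<in> DA i" for v i x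
  proof (cases "PT = 0")
    case True
    show ?thesis using PT_eq_0_imp_trivial[OF True, of "A i (S v x)"]
        PT_eq_0_imp_trivial[OF True, of "S v (A i x)"] by simp
  next
    case False
    have comm: "(A0^^r) (S v x) = S v ((A0^^r) x)" if "r \<le> degree (P i)" for r
    proof -
      have "x \<in> pow_dom r" using x DA_eq[OF i] pow_dom_mono[OF that] by simp
      then show ?thesis using recursive_family_regularizing[OF False, of v] by (simp add: regularizing_def)
    qed
    have "A i (S v x) = poly_op (degree (P i)) (P i) (S v x)"
      using A_eq_poly_op[OF i Tdom_DA[OF recursive_family_in_Tdom[OF hyp SR] i]]
      by (simp add: poly_op_degree[OF degree_P_le[OF i]])
    also have "\<dots> = (\<Sum>r\<le>degree (P i). coeff (P i) r *\<^sub>C S v ((A0^^r) x))"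
      by (simp add: poly_op_def comm)
    also have "\<dots> = S v (poly_op (degree (P i)) (P i) x)"
      by (simp add: poly_op_def bounded_clinear_sum_apply[OF chain_span_bounded[OF hyp recursive_family_in_chain_span[OF hyp SR]]]
          bounded_clinear_simps[OF chain_span_bounded[OF hyp recursive_family_in_chain_span[OF hyp SR]]])
    also have "\<dots> = S v (A i x)"
      using A_eq_poly_op[OF i x] by (simp add: poly_op_degree[OF degree_P_le[OF i]])
    finally show ?thesis .
  qed
  then show ?thesis
    unfolding disc_exist_fam_I_def
    using recursive_family_is_existence_family[OF hyp SR] recursive_family_in_Tdom[OF hyp SR] Tdom_DA
    by auto
qed

text \<open>With \<open>C = I\<close>, \<open>T\<^sup>-\<^sup>1 w = S(0) w / k(0)\<close> is regular enough for \<open>A\<^sub>i A\<^sub>l\<close> to be a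
  product of polynomials in \<open>A0\<close>.\<close>

lemma A_commute_on_range_Tinv:
  assumes C_id: "C = id" and i: "i \<in> {1..n}" and l: "l \<in> {1..n}" and w: "w \<in> D"
  shows "A i (A l (Ti w)) = A l (A i (Ti w))"
proof (cases "PT = 0")
  case True
  show ?thesis using PT_eq_0_imp_trivial[OF True, of "A i (A l (Ti w))"]
      PT_eq_0_imp_trivial[OF True, of "A l (A i (Ti w))"] by simp
next
  case False
  have "S 0 w \<in> pow_dom (dmax + dmax)"
    using recursive_family_regularizing[OF False, of 0] w unfolding regularizing_def Tdom_eq by blast
  moreover have "S 0 w = k 0 *\<^sub>C Ti w" using S_rec_0[OF hyp SR] C_id by simp
  ultimately have "inverse (k 0) *\<^sub>C (k 0 *\<^sub>C Ti w) \<in> pow_dom (dmax + dmax)"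
    by (metis csubspace_scaleC[OF csubspace_pow_dom])
  then have u: "Ti w \<in> pow_dom (dmax + dmax)" using k0 by simp
  have u_D: "Ti w \<in> D" using pow_dom_mono[OF _ u] by (simp add: Tdom_eq)
  have A_eq: "A j y = poly_op dmax (P j) y" if "j \<in> {1..n}" "y \<in> D" for j y
    using that by (simp add: A_eq_poly_op Tdom_DA)
  have A_D: "poly_op dmax (P j) (Ti w) \<in> D" for j
    using poly_op_in_pow_dom[OF u] by (simp add: Tdom_eq)
  have "A i (A l (Ti w)) = poly_op dmax (P i) (poly_op dmax (P l) (Ti w))"
    using A_eq[OF l u_D] A_eq[OF i A_D] by simp
  also have "\<dots> = poly_op dmax (P l) (poly_op dmax (P i) (Ti w))"
    by (rule poly_op_commute[OF u])
  also have "\<dots> = A l (A i (Ti w))"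
    using A_eq[OF i u_D] A_eq[OF l A_D] by simp
  finally show ?thesis .
qed

end

end

end

section \<open>Summability\<close>

lemma sum_shifted_le_suminf:
  fixes \<alpha> :: "nat \<Rightarrow> real"
  assumes \<alpha>_nonneg: "\<And>r. 0 \<le> \<alpha> r" and \<alpha>: "summable \<alpha>"
  shows "(\<Sum>v\<in>{Suc j..N}. \<alpha> (v - j)) \<le> (\<Sum>r. \<alpha> (Suc r))"
proof -
  have \<alpha>_Suc: "summable (\<lambda>r. \<alpha> (Suc r))" using \<alpha> by (simp add: summable_Suc_iff)
  show ?thesis
  proof (cases "j < N")
    case False
    then show ?thesis using \<alpha>_Suc \<alpha>_nonneg by (simp add: suminf_nonneg)
  next
    case True
    have "{Suc j..N} = {0 + Suc j..<(N - j) + Suc j}" using True by auto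
    then have "(\<Sum>v\<in>{Suc j..N}. \<alpha> (v - j)) = (\<Sum>r\<in>{0..<N - j}. \<alpha> (Suc r))"
      by (simp only: sum.shift_bounds_nat_ivl) simp
    also have "\<dots> \<le> (\<Sum>r. \<alpha> (Suc r))" by (rule sum_le_suminf[OF \<alpha>_Suc]) (auto intro: \<alpha>_nonneg)
    finally show ?thesis .
  qed
qed

lemma sum_convolution_le:
  fixes \<alpha> s :: "nat \<Rightarrow> real"
  assumes \<alpha>_nonneg: "\<And>r. 0 \<le> \<alpha> r" and \<alpha>: "summable \<alpha>" and s_nonneg: "\<And>v. 0 \<le> s v"
  shows "(\<Sum>v\<le>N. \<Sum>j<v. \<alpha> (v - j) * s j) \<le> (\<Sum>r. \<alpha> (Suc r)) * (\<Sum>v\<le>N. s v)"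
proof -
  have "(\<Sum>v\<le>N. \<Sum>j<v. \<alpha> (v - j) * s j) = (\<Sum>j<N. (\<Sum>v\<in>{Suc j..N}. \<alpha> (v - j)) * s j)"
    by (subst sum.nested_swap') (simp add: sum_distrib_right)
  also have "\<dots> \<le> (\<Sum>j<N. (\<Sum>r. \<alpha> (Suc r)) * s j)"
    using sum_shifted_le_suminf[OF \<alpha>_nonneg \<alpha>] s_nonneg by (intro sum_mono mult_right_mono) auto
  also have "\<dots> \<le> (\<Sum>r. \<alpha> (Suc r)) * (\<Sum>v\<le>N. s v)"
    using \<alpha> \<alpha>_nonneg s_nonneg
    by (auto simp: sum_distrib_left[symmetric] summable_Suc_iff
        intro!: mult_left_mono sum_mono2 suminf_nonneg)
  finally show ?thesis .
qed

text \<open>A discrete Volterra inequality \<open>s(v) \<le> c(v) + \<Sum>\<^sub>i \<Sum>\<^sub>j\<^sub><\<^sub>v \<alpha>\<^sub>i(v-j) q\<^sub>i s(j)\<close> whose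
  kernel has total mass \<open>\<theta> < 1\<close> bounds the partial sums of \<open>s\<close> by \<open>(\<Sum>c) / (1 - \<theta>)\<close>.\<close>

lemma summable_of_discrete_volterra_ineq:
  fixes s c q :: "nat \<Rightarrow> real" and \<alpha> :: "nat \<Rightarrow> nat \<Rightarrow> real" and I :: "nat set"
  assumes "finite I"
    and s_nonneg: "\<And>v. 0 \<le> s v" and c_nonneg: "\<And>v. 0 \<le> c v" and c: "summable c"
    and \<alpha>_nonneg: "\<And>i r. i \<in> I \<Longrightarrow> 0 \<le> \<alpha> i r" and \<alpha>: "\<And>i. i \<in> I \<Longrightarrow> summable (\<alpha> i)"
    and q_nonneg: "\<And>i. i \<in> I \<Longrightarrow> 0 \<le> q i"
    and ineq: "\<And>v. s v \<le> c v + (\<Sum>i\<in>I. \<Sum>j<v. \<alpha> i (v - j) * q i * s j)"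
    and small: "(\<Sum>i\<in>I. \<Sum>r. \<alpha> i (Suc r) * q i) < 1"
  shows "summable s"
proof -
  define \<theta> where "\<theta> = (\<Sum>i\<in>I. (\<Sum>r. \<alpha> i (Suc r)) * q i)"
  have "(\<Sum>r. \<alpha> i (Suc r) * q i) = (\<Sum>r. \<alpha> i (Suc r)) * q i" if "i \<in> I" for i
    using \<alpha>[OF that] by (simp add: suminf_mult2 summable_Suc_iff)
  then have \<theta>: "\<theta> < 1" using small unfolding \<theta>_def by simp
  have partial: "(\<Sum>v\<le>N. s v) \<le> suminf c / (1 - \<theta>)" for N
  proof -
    have "(\<Sum>v\<le>N. s v) \<le> (\<Sum>v\<le>N. c v + (\<Sum>i\<in>I. \<Sum>j<v. \<alpha> i (v - j) * q i * s j))"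
      by (rule sum_mono) (rule ineq)
    also have "\<dots> = (\<Sum>v\<le>N. c v) + (\<Sum>i\<in>I. \<Sum>v\<le>N. \<Sum>j<v. \<alpha> i (v - j) * q i * s j)"
      by (simp add: sum.distrib sum.swap[of _ I])
    also have "\<dots> \<le> suminf c + (\<Sum>i\<in>I. (\<Sum>r. \<alpha> i (Suc r)) * q i * (\<Sum>v\<le>N. s v))"
    proof (intro add_mono sum_le_suminf[OF c] sum_mono)
      fix i assume i: "i \<in> I"
      have "(\<Sum>v\<le>N. \<Sum>j<v. \<alpha> i (v - j) * q i * s j) = q i * (\<Sum>v\<le>N. \<Sum>j<v. \<alpha> i (v - j) * s j)"
        by (simp add: sum_distrib_left mult_ac)
      also have "\<dots> \<le> q i * ((\<Sum>r. \<alpha> i (Suc r)) * (\<Sum>v\<le>N. s v))"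
        using sum_convolution_le[OF \<alpha>_nonneg[OF i] \<alpha>[OF i] s_nonneg] q_nonneg[OF i] by (rule mult_left_mono)
      finally show "(\<Sum>v\<le>N. \<Sum>j<v. \<alpha> i (v - j) * q i * s j) \<le> (\<Sum>r. \<alpha> i (Suc r)) * q i * (\<Sum>v\<le>N. s v)"
        by (simp add: mult_ac)
    qed (use c_nonneg in auto)
    also have "\<dots> = suminf c + \<theta> * (\<Sum>v\<le>N. s v)" by (simp add: \<theta>_def sum_distrib_right)
    finally show ?thesis using \<theta> by (simp add: field_simps)
  qed
  show ?thesis
  proof (rule summableI_nonneg_bounded[OF s_nonneg])
    fix N
    have "(\<Sum>i<N. s i) \<le> (\<Sum>v\<le>N. s v)" using s_nonneg by (intro sum_mono2) auto
    also have "\<dots> \<le> suminf c / (1 - \<theta>)" by (rule partial)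
    finally show "(\<Sum>i<N. s i) \<le> suminf c / (1 - \<theta>)" .
  qed
qed

lemma summable_convolution:
  fixes t :: "nat \<Rightarrow> real" and b :: "nat \<Rightarrow> 'b::real_normed_vector"
  assumes t_nonneg: "\<And>v. 0 \<le> t v" and t: "summable t" and b: "summable (\<lambda>v. norm (b v))"
  shows "summable (\<lambda>v. \<Sum>j\<le>v. norm (b (v - j)) * t j)"
  using summable_Cauchy_product[of t "\<lambda>v. norm (b v)"] t t_nonneg b by (simp add: mult.commute)

lemma onorm_le_sum_scaleC:
  fixes f :: "'a::complex_banach \<Rightarrow> 'a"
  assumes h: "\<And>j. j \<in> J \<Longrightarrow> bounded_clinear (h j)"
    and f_eq: "\<And>x. f x = (\<Sum>j\<in>J. b j *\<^sub>C h j x)"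
  shows "onorm f \<le> (\<Sum>j\<in>J. cmod (b j) * onorm (h j))"
proof (rule onorm_bound)
  show "0 \<le> (\<Sum>j\<in>J. cmod (b j) * onorm (h j))"
    using onorm_bounded_clinear_nonneg[OF h] by (intro sum_nonneg mult_nonneg_nonneg) auto
  fix x
  have "norm (f x) \<le> (\<Sum>j\<in>J. norm (b j *\<^sub>C h j x))" unfolding f_eq by (rule norm_sum)
  also have "\<dots> \<le> (\<Sum>j\<in>J. cmod (b j) * (onorm (h j) * norm x))"
    using h by (intro sum_mono) (simp add: norm_scaleC mult_left_mono onorm_bounded_clinear)
  finally show "norm (f x) \<le> (\<Sum>j\<in>J. cmod (b j) * onorm (h j)) * norm x"
    by (simp add: sum_distrib_right mult.assoc)
qed

lemma onorm_le_scaleC_add_double_sum: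
  fixes f g :: "'a::complex_banach \<Rightarrow> 'a" and h :: "nat \<Rightarrow> nat \<Rightarrow> 'a \<Rightarrow> 'a"
  assumes g: "bounded_clinear g" and h: "\<And>i j. i \<in> I \<Longrightarrow> bounded_clinear (h i j)"
    and f_eq: "\<And>x. f x = c *\<^sub>C g x + (\<Sum>i\<in>I. \<Sum>j\<in>J. b i j *\<^sub>C h i j x)"
  shows "onorm f \<le> cmod c * onorm g + (\<Sum>i\<in>I. \<Sum>j\<in>J. cmod (b i j) * onorm (h i j))"
proof (rule onorm_bound)
  show "0 \<le> cmod c * onorm g + (\<Sum>i\<in>I. \<Sum>j\<in>J. cmod (b i j) * onorm (h i j))"
    using onorm_bounded_clinear_nonneg[OF g] onorm_bounded_clinear_nonneg[OF h]
    by (intro add_nonneg_nonneg mult_nonneg_nonneg sum_nonneg) auto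
  fix x
  have "norm (\<Sum>i\<in>I. \<Sum>j\<in>J. b i j *\<^sub>C h i j x) \<le> (\<Sum>i\<in>I. \<Sum>j\<in>J. norm (b i j *\<^sub>C h i j x))"
    by (intro order.trans[OF norm_sum] sum_mono norm_sum)
  also have "\<dots> \<le> (\<Sum>i\<in>I. \<Sum>j\<in>J. cmod (b i j) * (onorm (h i j) * norm x))"
    using h by (intro sum_mono) (simp add: norm_scaleC mult_left_mono onorm_bounded_clinear)
  finally have double_sum: "norm (\<Sum>i\<in>I. \<Sum>j\<in>J. b i j *\<^sub>C h i j x)
      \<le> (\<Sum>i\<in>I. \<Sum>j\<in>J. cmod (b i j) * onorm (h i j)) * norm x"
    by (simp add: sum_distrib_right mult.assoc)
  have "norm (f x) \<le> norm (c *\<^sub>C g x) + norm (\<Sum>i\<in>I. \<Sum>j\<in>J. b i j *\<^sub>C h i j x)"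
    unfolding f_eq by (rule norm_triangle_ineq)
  also have "\<dots> \<le> cmod c * (onorm g * norm x) + (\<Sum>i\<in>I. \<Sum>j\<in>J. cmod (b i j) * onorm (h i j)) * norm x"
    by (intro add_mono double_sum) (simp add: norm_scaleC mult_left_mono onorm_bounded_clinear[OF g])
  finally show "norm (f x) \<le> (cmod c * onorm g + (\<Sum>i\<in>I. \<Sum>j\<in>J. cmod (b i j) * onorm (h i j))) * norm x"
    by (simp add: algebra_simps)
qed

lemma summable_onorm_of_volterra_eq:
  fixes R H :: "nat \<Rightarrow> 'a::complex_banach \<Rightarrow> 'a" and G :: "'a \<Rightarrow> 'a"
  assumes "finite I" and R: "\<And>v. bounded_clinear (R v)" and G: "bounded_clinear G"
    and H: "\<And>i. i \<in> I \<Longrightarrow> bounded_clinear (H i)"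
    and R_eq: "\<And>v x. R v x = k v *\<^sub>C G x + (\<Sum>i\<in>I. \<Sum>j<v. a i (v - j) *\<^sub>C H i (R j x))"
    and k: "summable (\<lambda>v. cmod (k v))" and a: "\<And>i. i \<in> I \<Longrightarrow> summable (\<lambda>v. cmod (a i v))"
    and small: "(\<Sum>i\<in>I. \<Sum>v. cmod (a i (Suc v)) * onorm (H i)) < 1"
  shows "summable (\<lambda>v. onorm (R v))"
proof (rule summable_of_discrete_volterra_ineq[where \<alpha>="\<lambda>i r. cmod (a i r)" and q="\<lambda>i. onorm (H i)"
      and c="\<lambda>v. cmod (k v) * onorm G"])
  fix v
  have "onorm (R v) \<le> cmod (k v) * onorm G + (\<Sum>i\<in>I. \<Sum>j<v. cmod (a i (v - j)) * onorm (\<lambda>x. H i (R j x)))"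
    by (rule onorm_le_scaleC_add_double_sum[OF G _ R_eq]) (rule bounded_clinear_compose[OF H R])
  also have "\<dots> \<le> cmod (k v) * onorm G + (\<Sum>i\<in>I. \<Sum>j<v. cmod (a i (v - j)) * (onorm (H i) * onorm (R j)))"
    using H R by (intro add_left_mono sum_mono mult_left_mono onorm_compose_le) auto
  finally show "onorm (R v) \<le> cmod (k v) * onorm G + (\<Sum>i\<in>I. \<Sum>j<v. cmod (a i (v - j)) * onorm (H i) * onorm (R j))"
    by (simp add: mult.assoc)
qed (use assms(1) k a small in \<open>auto intro!: summable_mult2 mult_nonneg_nonneg onorm_bounded_clinear_nonneg R G H\<close>)

lemma summable_onorm_convolution:
  fixes R :: "nat \<Rightarrow> 'a::complex_banach \<Rightarrow> 'a" and F :: "nat \<Rightarrow> 'a \<Rightarrow> 'a"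
  assumes R: "\<And>j. bounded_clinear (R j)" and R_sum: "summable (\<lambda>j. onorm (R j))"
    and b: "summable (\<lambda>v. cmod (b v))"
    and F_eq: "\<And>v x. F v x = (\<Sum>j\<le>v. b (v - j) *\<^sub>C R j x)"
  shows "summable (\<lambda>v. onorm (F v))"
proof (rule summable_comparison_test)
  show "summable (\<lambda>v. \<Sum>j\<le>v. norm (b (v - j)) * onorm (R j))"
    by (rule summable_convolution[OF onorm_bounded_clinear_nonneg[OF R] R_sum]) (use b in simp)
  show "\<exists>N. \<forall>v\<ge>N. norm (onorm (F v)) \<le> (\<Sum>j\<le>v. norm (b (v - j)) * onorm (R j))"
  proof (intro exI allI impI)
    fix v
    have "bounded_clinear (F v)"
      unfolding F_eq[abs_def] using R by (intro bounded_clinear_sum bounded_clinear_scaleC)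
    then show "norm (onorm (F v)) \<le> (\<Sum>j\<le>v. norm (b (v - j)) * onorm (R j))"
      using onorm_le_sum_scaleC[OF R F_eq] by (simp add: onorm_bounded_clinear_nonneg)
  qed
qed

context multiterm_setting
begin

context
  assumes C_id: "C = id" and T_inj: "inj_on T D" and T_surj: "T ` D = UNIV"
    and Tinv_bounded: "bounded_clinear Ti"
begin

lemma Tinv_in_Tdom_UNIV: "Ti x \<in> D"
  using Tinv_in_Tdom[OF T_inj] T_surj by simp

lemma A_Tinv_bounded: "i \<in> {1..n} \<Longrightarrow> bounded_clinear (\<lambda>x. A i (Ti x))"
  using A_closed by (intro closed_op_compose_bounded_clinear[OF _ Tinv_bounded Tdom_DA[OF Tinv_in_Tdom_UNIV]]) auto

lemma opchain_bounded_inverse: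
  assumes "set is \<subseteq> {1..n}"
  shows "bounded_clinear (opchain Ti C A is) \<and> (\<forall>x. opchain Ti C A is x \<in> D)"
  using assms
proof (induction "is")
  case Nil
  show ?case using Tinv_bounded Tinv_in_Tdom_UNIV by (simp add: opchain_Nil_eq C_id)
next
  case (Cons i "is")
  then have i: "i \<in> {1..n}" and IH: "bounded_clinear (opchain Ti C A is)" "\<And>x. opchain Ti C A is x \<in> D"
    by auto
  have "bounded_clinear (\<lambda>x. A i (opchain Ti C A is x))"
    using A_closed i by (intro closed_op_compose_bounded_clinear[OF _ IH(1) Tdom_DA[OF IH(2) i]]) auto
  then show ?case
    using Tinv_in_Tdom_UNIV by (simp add: opchain_Cons_eq bounded_clinear_compose[OF Tinv_bounded])
qed

lemma hyp_ii_of_bounded_inverse: "hyp_ii C DB B DA A a n"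
proof -
  have "chain_defined D T Ti C DA A is x" if "set is \<subseteq> {1..n}" for "is" x
    using that by (induction "is") (auto simp: T_surj Tdom_DA opchain_bounded_inverse)
  then show ?thesis
    using T_inj T_surj Tinv_bounded opchain_bounded_inverse by (simp add: hyp_ii_def C_id)
qed

lemma Tinv_A_commute_of_existence_family_I:
  assumes FI: "disc_exist_fam_I k C DB B DA A a n {} S" and SR: "S_rec k C DB B DA A a n S"
    and i: "i \<in> {1..n}" and w: "w \<in> DA i"
  shows "Ti (A i w) = A i (Ti w)"
proof -
  have "A i (S 0 w) = S 0 (A i w)" using FI i w unfolding disc_exist_fam_I_def by blast
  then have "k 0 *\<^sub>C A i (Ti w) = k 0 *\<^sub>C Ti (A i w)"
    using Tdom_DA[OF Tinv_in_Tdom_UNIV i]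
    by (simp add: S_rec_0[OF hyp_ii_of_bounded_inverse SR] C_id clinear_op_scaleC[OF clinear_op_A[OF i]])
  then show ?thesis using k0 scaleC_left_cancel by metis
qed

context
  fixes S :: "nat \<Rightarrow> 'a \<Rightarrow> 'a"
  assumes SR: "S_rec k C DB B DA A a n S"
begin

lemma recursive_family_bounded_inverse:
  "S v x = k v *\<^sub>C Ti x + (\<Sum>i=1..n. \<Sum>j<v. a i (v - j) *\<^sub>C Ti (A i (S j x)))"
proof -
  have "Ti (A i (tail_sum (a i) S v x)) = (\<Sum>j<v. a i (v - j) *\<^sub>C Ti (A i (S j x)))" if "i \<in> {1..n}" for i
    using recursive_family_in_Tdom[OF hyp_ii_of_bounded_inverse SR] Tdom_DA[OF _ that]
    by (simp add: tail_sum_def clinear_op_sum[OF clinear_op_A[OF that]] clinear_op_scaleC[OF clinear_op_A[OF that]]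
        csubspace_scaleC[OF csubspace_DA[OF that]] bounded_clinear_sum_apply[OF Tinv_bounded]
        bounded_clinear_simps[OF Tinv_bounded])
  then show ?thesis
    using recursive_family_eq[OF hyp_ii_of_bounded_inverse SR, of v x]
    by (simp add: rec_rhs_def C_id bounded_clinear_simps[OF Tinv_bounded] bounded_clinear_sum_apply[OF Tinv_bounded])
qed

lemma recursive_family_summable_bounded_A:
  assumes A_bounded: "\<forall>i\<in>{1..n}. DA i = UNIV \<and> bounded_clinear (A i)"
    and a: "\<forall>i\<in>{1..n}. summable (\<lambda>v. cmod (a i v))" and k: "summable (\<lambda>v. cmod (k v))"
    and small: "(\<Sum>i=1..n. \<Sum>v. cmod (a i (Suc v)) * onorm (\<lambda>x. Ti (A i x))) < 1"
  shows "summable (\<lambda>v. onorm (S v))" "i \<in> {1..n} \<Longrightarrow> summable (\<lambda>v. onorm (\<lambda>x. A i (conv0 (a i) S v x)))"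
proof -
  note hyp = hyp_ii_of_bounded_inverse and A = A_bounded[rule_format, THEN conjunct2]
  have S: "bounded_clinear (S v)" for v
    by (rule chain_span_bounded[OF hyp recursive_family_in_chain_span[OF hyp SR]])
  show S_sum: "summable (\<lambda>v. onorm (S v))"
  proof (rule summable_onorm_of_volterra_eq[where H="\<lambda>i x. Ti (A i x)",
        OF _ S Tinv_bounded _ recursive_family_bounded_inverse k _ small])
    show "bounded_clinear (\<lambda>x. Ti (A i x))" if "i \<in> {1..n}" for i
      by (rule bounded_clinear_compose[OF Tinv_bounded A[OF that]])
  qed (use a in auto)
  fix i assume i: "i \<in> {1..n}"
  have AS: "bounded_clinear (\<lambda>x. A i (S j x))" for j by (rule bounded_clinear_compose[OF A[OF i] S])
  have "summable (\<lambda>j. onorm (A i) * onorm (S j))" by (rule summable_mult[OF S_sum])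
  then have AS_sum: "summable (\<lambda>j. onorm (\<lambda>x. A i (S j x)))"
    by (rule summable_comparison_test[rotated])
      (auto intro!: exI[of _ 0] simp: onorm_bounded_clinear_nonneg[OF AS] onorm_compose_le[OF A[OF i] S])
  have conv_eq: "A i (conv0 (a i) S v x) = (\<Sum>j\<le>v. a i (v - j) *\<^sub>C A i (S j x))" for v x
    using A[OF i] by (simp add: conv0_def atLeast0AtMost bounded_clinear_sum_apply bounded_clinear_simps)
  show "summable (\<lambda>v. onorm (\<lambda>x. A i (conv0 (a i) S v x)))"
    by (rule summable_onorm_convolution[OF AS AS_sum _ conv_eq]) (use a i in blast)
qed

lemma A_recursive_family_eq:
  assumes TiA: "\<And>i w. i \<in> {1..n} \<Longrightarrow> w \<in> DA i \<Longrightarrow> Ti (A i w) = A i (Ti w)"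
    and A_comm: "\<And>i l w. i \<in> {1..n} \<Longrightarrow> l \<in> {1..n} \<Longrightarrow> w \<in> D \<Longrightarrow> A i (A l (Ti w)) = A l (A i (Ti w))"
    and i: "i \<in> {1..n}"
  shows "A i (S v x) = k v *\<^sub>C A i (Ti x) + (\<Sum>l=1..n. \<Sum>j<v. a l (v - j) *\<^sub>C A l (Ti (A i (S j x))))"
proof -
  note Ai = clinear_op_A[OF i] and DAi = csubspace_DA[OF i]
  have S_D: "S j x \<in> D" for j by (rule recursive_family_in_Tdom[OF hyp_ii_of_bounded_inverse SR])
  have ATiS: "A l (Ti (S j x)) = Ti (A l (S j x))" if "l \<in> {1..n}" for l j
    using TiA[OF that Tdom_DA[OF S_D that]] by simp
  have memA: "A l (Ti (S j x)) \<in> DA i" if "l \<in> {1..n}" for l j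
    using ATiS[OF that] Tdom_DA[OF Tinv_in_Tdom_UNIV i] by simp
  have mem: "a l (v - j) *\<^sub>C A l (Ti (S j x)) \<in> DA i" if "l \<in> {1..n}" for l j
    using memA[OF that] by (rule csubspace_scaleC[OF DAi])
  have swap: "A i (A l (Ti (S j x))) = A l (Ti (A i (S j x)))" if "l \<in> {1..n}" for l j
    using A_comm[OF i that S_D] TiA[OF i Tdom_DA[OF S_D i]] by simp
  have inner: "(\<Sum>j<v. a l (v - j) *\<^sub>C A l (Ti (S j x))) \<in> DA i" if "l \<in> {1..n}" for l
    using mem[OF that] by (intro csubspace_sum[OF DAi])
  have "A i (\<Sum>l=1..n. \<Sum>j<v. a l (v - j) *\<^sub>C A l (Ti (S j x)))
      = (\<Sum>l=1..n. A i (\<Sum>j<v. a l (v - j) *\<^sub>C A l (Ti (S j x))))"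
    by (rule clinear_op_sum[OF Ai]) (rule inner)
  also have "\<dots> = (\<Sum>l=1..n. \<Sum>j<v. A i (a l (v - j) *\<^sub>C A l (Ti (S j x))))"
  proof (rule sum.cong[OF refl])
    fix l assume "l \<in> {1..n}"
    then show "A i (\<Sum>j<v. a l (v - j) *\<^sub>C A l (Ti (S j x))) = (\<Sum>j<v. A i (a l (v - j) *\<^sub>C A l (Ti (S j x))))"
      by (intro clinear_op_sum[OF Ai] mem)
  qed
  also have "\<dots> = (\<Sum>l=1..n. \<Sum>j<v. a l (v - j) *\<^sub>C A l (Ti (A i (S j x))))"
    using memA by (simp add: clinear_op_scaleC[OF Ai] swap)
  finally have "A i (\<Sum>l=1..n. \<Sum>j<v. a l (v - j) *\<^sub>C A l (Ti (S j x)))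
      = (\<Sum>l=1..n. \<Sum>j<v. a l (v - j) *\<^sub>C A l (Ti (A i (S j x))))" .
  moreover have "S v x = k v *\<^sub>C Ti x + (\<Sum>l=1..n. \<Sum>j<v. a l (v - j) *\<^sub>C A l (Ti (S j x)))"
    using recursive_family_bounded_inverse[of v x] by (simp add: ATiS)
  moreover have "(\<Sum>l=1..n. \<Sum>j<v. a l (v - j) *\<^sub>C A l (Ti (S j x))) \<in> DA i"
    by (rule csubspace_sum[OF DAi]) (rule inner)
  ultimately show ?thesis
    using Tdom_DA[OF Tinv_in_Tdom_UNIV i]
    by (simp add: clinear_op_add[OF Ai] clinear_op_scaleC[OF Ai] csubspace_scaleC[OF DAi])
qed

lemma recursive_family_summable_commuting_A:
  assumes FI: "disc_exist_fam_I k C DB B DA A a n {} S"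
    and A_comm: "\<And>i l w. i \<in> {1..n} \<Longrightarrow> l \<in> {1..n} \<Longrightarrow> w \<in> D \<Longrightarrow> A i (A l (Ti w)) = A l (A i (Ti w))"
    and a: "\<forall>i\<in>{1..n}. summable (\<lambda>v. cmod (a i v))" and k: "summable (\<lambda>v. cmod (k v))"
    and small: "(\<Sum>i=1..n. \<Sum>v. cmod (a i (Suc v)) * onorm (\<lambda>x. A i (Ti x))) < 1"
  shows "summable (\<lambda>v. onorm (S v))" "i \<in> {1..n} \<Longrightarrow> summable (\<lambda>v. onorm (\<lambda>x. A i (S v x)))"
    "i \<in> {1..n} \<Longrightarrow> summable (\<lambda>v. onorm (\<lambda>x. A i (conv0 (a i) S v x)))"
proof -
  note hyp = hyp_ii_of_bounded_inverse
  note TiA = Tinv_A_commute_of_existence_family_I[OF FI SR]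
  have S: "bounded_clinear (S v)" for v
    by (rule chain_span_bounded[OF hyp recursive_family_in_chain_span[OF hyp SR]])
  have S_D: "S j x \<in> D" for j x by (rule recursive_family_in_Tdom[OF hyp SR])
  have S_eq: "S v x = k v *\<^sub>C Ti x + (\<Sum>i=1..n. \<Sum>j<v. a i (v - j) *\<^sub>C A i (Ti (S j x)))" for v x
    using recursive_family_bounded_inverse[of v x] TiA Tdom_DA[OF S_D] by simp
  show "summable (\<lambda>v. onorm (S v))"
    by (rule summable_onorm_of_volterra_eq[where H="\<lambda>i x. A i (Ti x)", OF _ S Tinv_bounded _ S_eq k _ small])
      (use a A_Tinv_bounded in auto)
  fix i assume i: "i \<in> {1..n}"
  have AS: "bounded_clinear (\<lambda>x. A i (S j x))" for j by (rule recursive_family_A_bounded[OF hyp SR i])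
  show AS_sum: "summable (\<lambda>v. onorm (\<lambda>x. A i (S v x)))"
    by (rule summable_onorm_of_volterra_eq[where H="\<lambda>l x. A l (Ti x)",
          OF _ AS A_Tinv_bounded[OF i] _ A_recursive_family_eq[OF TiA A_comm i] k _ small])
      (use a A_Tinv_bounded in auto)
  have conv_eq: "A i (conv0 (a i) S v x) = (\<Sum>j\<le>v. a i (v - j) *\<^sub>C A i (S j x))" for v x
    using Tdom_DA[OF S_D i]
    by (simp add: conv0_def atLeast0AtMost clinear_op_sum[OF clinear_op_A[OF i]]
        clinear_op_scaleC[OF clinear_op_A[OF i]] csubspace_scaleC[OF csubspace_DA[OF i]])
  show "summable (\<lambda>v. onorm (\<lambda>x. A i (conv0 (a i) S v x)))"
    by (rule summable_onorm_convolution[OF AS AS_sum _ conv_eq]) (use a i in blast)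
qed

end

end

lemma multiterm_poly_settingI:
  assumes "closed_op D0 A0" "op_commutes_bdd C D0 A0" "poly_of_common_op DB B DA A n D0 A0"
  obtains PB P where "multiterm_poly_setting n DB B DA A C k a D0 A0 PB P"
proof -
  obtain PB P where "is_poly_of DB B D0 A0 PB" "\<forall>i\<in>{1..n}. is_poly_of (DA i) (A i) D0 A0 (P i)"
    using assms(3) unfolding poly_of_common_op_def by blast
  then show ?thesis
    using assms(1,2) multiterm_setting_axioms
    by (intro that[of PB P] multiterm_poly_setting.intro poly_calculus.intro multiterm_poly_setting_axioms.intro)
      (simp_all add: closed_op_def)
qed

lemma recursive_family_properties:
  "hyp_ii C DB B DA A a n \<longrightarrow>
     (\<forall>S. S_rec k C DB B DA A a n S \<longrightarrow>
        (\<forall>v\<ge>1. \<forall>x. (\<forall>i\<in>{1..n}. tail_sum (a i) S v x \<in> DA i) \<and> rhs S v x \<in> T ` D) \<and>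
        (\<forall>v. bounded_clinear (S v)) \<and>
        (\<forall>i\<in>{1..n}. \<forall>v. range (S v) \<subseteq> DA i \<and> bounded_clinear (\<lambda>x. A i (S v x))) \<and>
        exist_fam S \<and>
        (\<forall>S'. exist_fam S' \<longrightarrow> S' = S) \<and>
        (\<forall>I. I \<subseteq> {1..n} \<and> U1 C DB B DA A n I \<and> U2 DB B DA A n I \<and> U3 DA A n I
              \<longrightarrow> disc_exist_fam_I k C DB B DA A a n I S) \<and>
        ((\<exists>D0 A0. closed_op D0 A0 \<and> op_commutes_bdd C D0 A0 \<and> poly_of_common_op DB B DA A n D0 A0)
              \<longrightarrow> disc_exist_fam_I k C DB B DA A a n {} S))"
  (is "_ \<longrightarrow> (\<forall>S. _ \<longrightarrow> ?conclusion S)")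
proof (intro impI allI)
  fix S assume hyp: "hyp_ii C DB B DA A a n" and SR: "S_rec k C DB B DA A a n S"
  have poly: "disc_exist_fam_I k C DB B DA A a n {} S"
    if ex: "\<exists>D0 A0. closed_op D0 A0 \<and> op_commutes_bdd C D0 A0 \<and> poly_of_common_op DB B DA A n D0 A0"
  proof -
    obtain D0 A0 where "closed_op D0 A0" "op_commutes_bdd C D0 A0" "poly_of_common_op DB B DA A n D0 A0"
      using ex by blast
    then obtain PB P where "multiterm_poly_setting n DB B DA A C k a D0 A0 PB P"
      by (rule multiterm_poly_settingI)
    then show ?thesis by (rule multiterm_poly_setting.recursive_family_commutes_poly[OF _ hyp SR])
  qed
  have "\<forall>v\<ge>1. \<forall>x. (\<forall>i\<in>{1..n}. tail_sum (a i) S v x \<in> DA i) \<and> rhs S v x \<in> T ` D"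
    using Tdom_DA tail_sum_in_Tdom[OF hyp SR] rhs_in_range_T[OF hyp SR] by blast
  moreover have "\<forall>i\<in>{1..n}. \<forall>v. range (S v) \<subseteq> DA i \<and> bounded_clinear (\<lambda>x. A i (S v x))"
    using Tdom_DA recursive_family_in_Tdom[OF hyp SR] recursive_family_A_bounded[OF hyp SR] by blast
  moreover have "\<forall>v. bounded_clinear (S v)"
    using chain_span_bounded[OF hyp recursive_family_in_chain_span[OF hyp SR]] by blast
  moreover have "\<forall>I. I \<subseteq> {1..n} \<and> U1 C DB B DA A n I \<and> U2 DB B DA A n I \<and> U3 DA A n I
      \<longrightarrow> disc_exist_fam_I k C DB B DA A a n I S"
    using recursive_family_commutes[OF hyp SR] by blast
  ultimately show "?conclusion S"
    using recursive_family_is_existence_family[OF hyp SR] existence_family_unique[OF hyp SR] poly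
    by blast
qed

lemma commuting_case_conditions:
  assumes C_id: "C = id" and T_inj: "inj_on T D" and T_surj: "T ` D = UNIV"
    and Tinv_bounded: "bounded_clinear Ti" and SR: "S_rec k C DB B DA A a n S"
    and cond: "U1 C DB B DA A n {} \<and> U2 DB B DA A n {} \<and> U3 DA A n {} \<or>
      (\<exists>D0 A0. closed_op D0 A0 \<and> poly_of_common_op DB B DA A n D0 A0)"
  shows "disc_exist_fam_I k C DB B DA A a n {} S"
    "\<And>i l w. i \<in> {1..n} \<Longrightarrow> l \<in> {1..n} \<Longrightarrow> w \<in> D \<Longrightarrow> A i (A l (Ti w)) = A l (A i (Ti w))"
proof -
  note hyp = hyp_ii_of_bounded_inverse[OF C_id T_inj T_surj Tinv_bounded]
  note Ti_D = Tinv_in_Tdom_UNIV[OF C_id T_inj T_surj Tinv_bounded]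
  consider (U) "U1 C DB B DA A n {}" "U2 DB B DA A n {}" "U3 DA A n {}"
    | (poly) D0 A0 where "closed_op D0 A0" "poly_of_common_op DB B DA A n D0 A0"
    using cond by blast
  then have "disc_exist_fam_I k C DB B DA A a n {} S \<and>
      (\<forall>i\<in>{1..n}. \<forall>l\<in>{1..n}. \<forall>w\<in>D. A i (A l (Ti w)) = A l (A i (Ti w)))"
  proof cases
    case U
    have "A i (A l (Ti w)) = A l (A i (Ti w))" if "i \<in> {1..n}" "l \<in> {1..n}" for i l w
      using U(3) that Tdom_DA[OF Ti_D] unfolding U3_def by simp
    then show ?thesis using recursive_family_commutes[OF hyp SR U] by blast
  next
    case poly
    moreover have "op_commutes_bdd C D0 A0" by (simp add: op_commutes_bdd_def C_id)
    ultimately obtain PB P where "multiterm_poly_setting n DB B DA A C k a D0 A0 PB P"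
      by (blast intro: multiterm_poly_settingI)
    then show ?thesis
      using multiterm_poly_setting.recursive_family_commutes_poly[OF _ hyp SR]
        multiterm_poly_setting.A_commute_on_range_Tinv[OF _ hyp SR C_id] by blast
  qed
  then show "disc_exist_fam_I k C DB B DA A a n {} S"
    "\<And>i l w. i \<in> {1..n} \<Longrightarrow> l \<in> {1..n} \<Longrightarrow> w \<in> D \<Longrightarrow> A i (A l (Ti w)) = A l (A i (Ti w))"
    by blast+
qed

lemma recursive_family_summability:
  "C = id \<and> inj_on T D \<and> T ` D = UNIV \<and> bounded_clinear Ti \<and>
    (\<forall>i\<in>{1..n}. summable (\<lambda>v. cmod (a i v))) \<and> summable (\<lambda>v. cmod (k v)) \<and>
    (((\<forall>i\<in>{1..n}. DA i = UNIV \<and> bounded_clinear (A i)) \<and>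
      (\<Sum>i=1..n. \<Sum>v. cmod (a i (Suc v)) * onorm (\<lambda>x. Ti (A i x))) < 1)
     \<or>
     ((U1 C DB B DA A n {} \<and> U2 DB B DA A n {} \<and> U3 DA A n {} \<or>
       (\<exists>D0 A0. closed_op D0 A0 \<and> poly_of_common_op DB B DA A n D0 A0)) \<and>
      (\<Sum>i=1..n. \<Sum>v. cmod (a i (Suc v)) * onorm (\<lambda>x. A i (Ti x))) < 1))
   \<longrightarrow> hyp_ii C DB B DA A a n \<and>
       (\<forall>S. S_rec k C DB B DA A a n S \<longrightarrow>
          summable (\<lambda>v. onorm (S v)) \<and>
          (\<forall>i\<in>{1..n}. summable (\<lambda>v. onorm (\<lambda>x. A i (conv0 (a i) S v x)))) \<and>
          (((U1 C DB B DA A n {} \<and> U2 DB B DA A n {} \<and> U3 DA A n {} \<or>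
             (\<exists>D0 A0. closed_op D0 A0 \<and> poly_of_common_op DB B DA A n D0 A0)) \<and>
            (\<Sum>i=1..n. \<Sum>v. cmod (a i (Suc v)) * onorm (\<lambda>x. A i (Ti x))) < 1)
           \<longrightarrow> (\<forall>i\<in>{1..n}. summable (\<lambda>v. onorm (\<lambda>x. A i (S v x))))))"
  (is "_ \<and> _ \<and> _ \<and> _ \<and> ?a \<and> ?k \<and> (?case_a \<or> ?case_b) \<longrightarrow> ?conclusion")
proof (rule impI, elim conjE)
  assume C_id: "C = id" and T_inj: "inj_on T D" and T_surj: "T ` D = UNIV" and Ti: "bounded_clinear Ti"
    and a: ?a and k: ?k and cases: "?case_a \<or> ?case_b"
  note bounded_A = recursive_family_summable_bounded_A[OF C_id T_inj T_surj Ti]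
  note commuting_A = recursive_family_summable_commuting_A[OF C_id T_inj T_surj Ti]
  note conditions = commuting_case_conditions[OF C_id T_inj T_surj Ti]
  show ?conclusion
  proof (intro conjI allI impI)
    show "hyp_ii C DB B DA A a n" by (rule hyp_ii_of_bounded_inverse[OF C_id T_inj T_surj Ti])
    fix S assume SR: "S_rec k C DB B DA A a n S"
    show "\<forall>i\<in>{1..n}. summable (\<lambda>v. onorm (\<lambda>x. A i (S v x)))" if ?case_b
      using commuting_A(2)[OF SR conditions[OF SR conjunct1[OF that]] a k conjunct2[OF that]] by blast
    have "summable (\<lambda>v. onorm (S v)) \<and> (\<forall>i\<in>{1..n}. summable (\<lambda>v. onorm (\<lambda>x. A i (conv0 (a i) S v x))))"
      using cases
    proof
      assume case_a: "?case_a"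
      show ?thesis
        using bounded_A[OF SR conjunct1[OF case_a] a k conjunct2[OF case_a]] by blast
    next
      assume case_b: "?case_b"
      show ?thesis
        using commuting_A(1,3)[OF SR conditions[OF SR conjunct1[OF case_b]] a k conjunct2[OF case_b]] by blast
    qed
    then show "summable (\<lambda>v. onorm (S v))"
      "\<forall>i\<in>{1..n}. summable (\<lambda>v. onorm (\<lambda>x. A i (conv0 (a i) S v x)))" by blast+
  qed
qed

end

theorem theorem3p3:
  fixes n :: nat
    and DB :: "'a::complex_banach set" and B :: "'a \<Rightarrow> 'a"
    and DA :: "nat \<Rightarrow> 'a set" and A :: "nat \<Rightarrow> 'a \<Rightarrow> 'a"
    and C :: "'a \<Rightarrow> 'a"
    and k :: "nat \<Rightarrow> complex" and a :: "nat \<Rightarrow> nat \<Rightarrow> complex"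
  assumes n_pos: "1 \<le> n"
    and B_closed: "closed_op DB B"
    and A_closed: "\<forall>i\<in>{1..n}. closed_op (DA i) (A i)"
    and C_bdd: "bounded_clinear C" and C_inj: "inj C"
    and k0: "k 0 \<noteq> 0"
    and a0: "\<forall>i\<in>{1..n}. a i 0 \<noteq> 0"
  shows
  \<comment> \<open>(i)\<close>
  "(\<forall>S. disc_exist_fam k C DB B DA A a n S \<and>
        (\<forall>x\<in>Tdom DB DA n. S 0 (B x) = B (S 0 x) \<and> (\<forall>i\<in>{1..n}. S 0 (A i x) = A i (S 0 x)))
     \<longrightarrow> inj_on (Top B A a n) (Tdom DB DA n) \<and>
         range C \<subseteq> Top B A a n ` Tdom DB DA n \<and>
         bounded_clinear (\<lambda>x. Tinv DB DA B A a n (C x)) \<and>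
         S 0 = (\<lambda>x. k 0 *\<^sub>C Tinv DB DA B A a n (C x)) \<and>
         (\<forall>v\<ge>1. \<forall>x. (\<forall>i\<in>{1..n}. tail_sum (a i) S v x \<in> DA i) \<and>
                    rec_rhs k C A a n S v x \<in> Top B A a n ` Tdom DB DA n \<and>
                    S v x = Tinv DB DA B A a n (rec_rhs k C A a n S v x)) \<and>
         (\<forall>i\<in>{1..n}. \<forall>v. range (S v) \<subseteq> DA i \<and> bounded_clinear (\<lambda>x. A i (S v x))))
   \<and>
  \<comment> \<open>(ii)\<close>
   (hyp_ii C DB B DA A a n \<longrightarrow>
     (\<forall>S. S_rec k C DB B DA A a n S \<longrightarrow>
        (\<forall>v\<ge>1. \<forall>x. (\<forall>i\<in>{1..n}. tail_sum (a i) S v x \<in> DA i) \<and>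
                   rec_rhs k C A a n S v x \<in> Top B A a n ` Tdom DB DA n) \<and>
        (\<forall>v. bounded_clinear (S v)) \<and>
        (\<forall>i\<in>{1..n}. \<forall>v. range (S v) \<subseteq> DA i \<and> bounded_clinear (\<lambda>x. A i (S v x))) \<and>
        disc_exist_fam k C DB B DA A a n S \<and>
        (\<forall>S'. disc_exist_fam k C DB B DA A a n S' \<longrightarrow> S' = S) \<and>
        (\<forall>I. I \<subseteq> {1..n} \<and> U1 C DB B DA A n I \<and> U2 DB B DA A n I \<and> U3 DA A n I
              \<longrightarrow> disc_exist_fam_I k C DB B DA A a n I S) \<and>
        ((\<exists>D0 A0. closed_op D0 A0 \<and> op_commutes_bdd C D0 A0 \<and> poly_of_common_op DB B DA A n D0 A0)
              \<longrightarrow> disc_exist_fam_I k C DB B DA A a n {} S)))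
   \<and>
  \<comment> \<open>(iii)\<close>
   (C = id \<and>
    inj_on (Top B A a n) (Tdom DB DA n) \<and> Top B A a n ` Tdom DB DA n = UNIV \<and>
    bounded_clinear (Tinv DB DA B A a n) \<and>
    (\<forall>i\<in>{1..n}. summable (\<lambda>v. cmod (a i v))) \<and> summable (\<lambda>v. cmod (k v)) \<and>
    (((\<forall>i\<in>{1..n}. DA i = UNIV \<and> bounded_clinear (A i)) \<and>
      (\<Sum>i=1..n. \<Sum>v. cmod (a i (Suc v)) * onorm (\<lambda>x. Tinv DB DA B A a n (A i x))) < 1)
     \<or>
     ((U1 C DB B DA A n {} \<and> U2 DB B DA A n {} \<and> U3 DA A n {} \<or>
       (\<exists>D0 A0. closed_op D0 A0 \<and> poly_of_common_op DB B DA A n D0 A0)) \<and>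
      (\<Sum>i=1..n. \<Sum>v. cmod (a i (Suc v)) * onorm (\<lambda>x. A i (Tinv DB DA B A a n x))) < 1))
   \<longrightarrow> hyp_ii C DB B DA A a n \<and>
       (\<forall>S. S_rec k C DB B DA A a n S \<longrightarrow>
          summable (\<lambda>v. onorm (S v)) \<and>
          (\<forall>i\<in>{1..n}. summable (\<lambda>v. onorm (\<lambda>x. A i (conv0 (a i) S v x)))) \<and>
          (((U1 C DB B DA A n {} \<and> U2 DB B DA A n {} \<and> U3 DA A n {} \<or>
             (\<exists>D0 A0. closed_op D0 A0 \<and> poly_of_common_op DB B DA A n D0 A0)) \<and>
            (\<Sum>i=1..n. \<Sum>v. cmod (a i (Suc v)) * onorm (\<lambda>x. A i (Tinv DB DA B A a n x))) < 1)
           \<longrightarrow> (\<forall>i\<in>{1..n}. summable (\<lambda>v. onorm (\<lambda>x. A i (S v x)))))))"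
proof -
  interpret multiterm_setting n DB B DA A C k a
    using B_closed A_closed C_bdd C_inj k0 a0 by unfold_locales
  show ?thesis
    by (intro conjI existence_family_necessary_conditions recursive_family_properties
        recursive_family_summability)
qed

end
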